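(* Let $V=\mathbb R^{p,q}$, $p=p'+p''$ with $p'\equiv3\pmod4$, $W$ a $C\ell^0(V)$-module, $\Pi:\wedge^2W\to V$ an $\mathfrak o(V)$-equivariant linear map, and $b=b(\Pi)$. Then there exist integers $l,m\ge0$ and a $b$-orthogonal direct sum decomposition $W=\bigoplus_{i=0}^{l+m}W_i$ into $C\ell^0(V)$-submodules such that: (1) $\Pi(W_0\wedge W)=0$, $\Pi(W_i\wedge W_j)=0$ for $i\ne j$, and $\Pi(\wedge^2W_i)=V$ for $i=1,\dots,l$; (2) $W_0=\ker b$ and $b|_{W_i\times W_i}$ is nondegenerate for all $i\ge1$; (3) for $i=1,\dots,l$ the module $W_i$ is irreducible, and for $j=l+1,\dots,l+m$ the module $W_j=X_j\oplus X'_j$ is the direct sum of two irreducible $b$-isotropic $C\ell^0(V)$-submodules; (4) the restriction of $b$ to any irreducible $C\ell^0(V)$-submodule of $X=\bigoplus_{j=l+1}^{l+m}W_j$ vanishes.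
   Context: Let $V=\mathbb{R}^{p,q}$ be $\mathbb R^{p+q}$ with the scalar product $\langle x,y\rangle=\sum_{i=1}^{p}x^iy^i-\sum_{j=p+1}^{p+q}x^jy^j$ and its standard orthonormal basis. The Clifford algebra $C\ell(V)$ is generated by $V$ subject to $xy+yx=-2\langle x,y\rangle 1$, with even part $C\ell^0(V)$. Identify $\mathfrak{o}(V)=\wedge^2V$ via $(x\wedge y)(z)=\langle y,z\rangle x-\langle x,z\rangle y$; the map $x\wedge y\mapsto-\frac14(xy-yx)$ is a Lie algebra isomorphism of $\mathfrak o(V)$ onto $\mathfrak{spin}(V)\subset C\ell^0(V)$, and via it $\mathfrak o(V)$ acts on any $C\ell^0(V)$-module $W$. Fix $p=p'+p''$ with $p'\equiv 3\pmod 4$; $e_1,\dots,e_{p'}$ are the first $p'$ standard basis vectors, and $b(s,t)=\langle e_1,\Pi(e_2\cdots e_{p'}s\wedge t)\rangle$ for $s,t\in W$ (Clifford product acting on $W$); by a result of the paper $b$ is symmetric. A subspace is $b$-isotropic if $b$ vanishes on it. *)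

theory Defs
  imports "HOL-Analysis.Analysis"
begin

text \<open>Vectors of V = R^{p,q} are represented as functions nat => real vanishing
  outside the index range {..<p+q}; index i (0-based) is the (i+1)-th standard basis vector.\<close>

definition Vset :: "nat \<Rightarrow> (nat \<Rightarrow> real) set" where
  "Vset n = {x. \<forall>i\<ge>n. x i = 0}"

definition sgnpq :: "nat \<Rightarrow> nat \<Rightarrow> real" where
  "sgnpq p i = (if i < p then 1 else -1)"

definition ip :: "nat \<Rightarrow> nat \<Rightarrow> (nat \<Rightarrow> real) \<Rightarrow> (nat \<Rightarrow> real) \<Rightarrow> real" where
  "ip p q x y = (\<Sum>i<p+q. sgnpq p i * x i * y i)"

definition stdbasis :: "nat \<Rightarrow> nat \<Rightarrow> real" where
  "stdbasis i = (\<lambda>j. if j = i then 1 else 0)"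

text \<open>Elements are coefficient functions on the blade basis e_S = e_{s1}...e_{sk}
  (s1 < ... < sk), S a subset of {..<p+q}.  Relation: x y + y x = -2<x,y>, so e_i^2 = -<e_i,e_i>.\<close>

definition Cl :: "nat \<Rightarrow> (nat set \<Rightarrow> real) set" where
  "Cl n = {x. \<forall>S. \<not> S \<subseteq> {..<n} \<longrightarrow> x S = 0}"

definition Cl0 :: "nat \<Rightarrow> (nat set \<Rightarrow> real) set" where
  "Cl0 n = {x \<in> Cl n. \<forall>S. odd (card S) \<longrightarrow> x S = 0}"

definition blade_coeff :: "nat \<Rightarrow> nat set \<Rightarrow> nat set \<Rightarrow> real" where
  "blade_coeff p S T =
     (-1) ^ card {(s, t). s \<in> S \<and> t \<in> T \<and> t < s} * (\<Prod>i\<in>S \<inter> T. - sgnpq p i)"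

definition cl_mult :: "nat \<Rightarrow> nat \<Rightarrow> (nat set \<Rightarrow> real) \<Rightarrow> (nat set \<Rightarrow> real) \<Rightarrow> (nat set \<Rightarrow> real)" where
  "cl_mult p q x y = (\<lambda>U. \<Sum>S\<in>Pow {..<p+q}. \<Sum>T\<in>Pow {..<p+q}.
       if (S - T) \<union> (T - S) = U then x S * y T * blade_coeff p S T else 0)"

definition cl_one :: "nat set \<Rightarrow> real" where
  "cl_one = (\<lambda>S. if S = {} then 1 else 0)"

definition cl_blade :: "nat set \<Rightarrow> nat set \<Rightarrow> real" where
  "cl_blade S = (\<lambda>T. if T = S then 1 else 0)"

definition cl_vec :: "nat \<Rightarrow> (nat \<Rightarrow> real) \<Rightarrow> nat set \<Rightarrow> real" where
  "cl_vec n x = (\<lambda>S. if \<exists>i<n. S = {i} then x (the_elem S) else 0)"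

text \<open>The isomorphism o(V) = wedge^2 V --> spin(V): x wedge y |-> -1/4 (xy - yx).\<close>
definition spin :: "nat \<Rightarrow> nat \<Rightarrow> (nat \<Rightarrow> real) \<Rightarrow> (nat \<Rightarrow> real) \<Rightarrow> nat set \<Rightarrow> real" where
  "spin p q x y = (\<lambda>S. - (1/4) * (cl_mult p q (cl_vec (p+q) x) (cl_vec (p+q) y) S
                                  - cl_mult p q (cl_vec (p+q) y) (cl_vec (p+q) x) S))"

definition oV_act :: "nat \<Rightarrow> nat \<Rightarrow> (nat \<Rightarrow> real) \<Rightarrow> (nat \<Rightarrow> real) \<Rightarrow> (nat \<Rightarrow> real) \<Rightarrow> nat \<Rightarrow> real" where
  "oV_act p q x y z = (\<lambda>i. ip p q y z * x i - ip p q x z * y i)"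

definition cl0_module :: "nat \<Rightarrow> nat \<Rightarrow> ((nat set \<Rightarrow> real) \<Rightarrow> 'w::euclidean_space \<Rightarrow> 'w) \<Rightarrow> bool" where
  "cl0_module p q act \<longleftrightarrow>
     (\<forall>x\<in>Cl0 (p+q). linear (act x)) \<and>
     (\<forall>x\<in>Cl0 (p+q). \<forall>y\<in>Cl0 (p+q). \<forall>u. act (\<lambda>S. x S + y S) u = act x u + act y u) \<and>
     (\<forall>x\<in>Cl0 (p+q). \<forall>c u. act (\<lambda>S. c * x S) u = c *\<^sub>R act x u) \<and>
     (\<forall>u. act cl_one u = u) \<and>
     (\<forall>x\<in>Cl0 (p+q). \<forall>y\<in>Cl0 (p+q). \<forall>u. act (cl_mult p q x y) u = act x (act y u))"

definition cl0_submodule :: "nat \<Rightarrow> nat \<Rightarrow> ((nat set \<Rightarrow> real) \<Rightarrow> 'w::euclidean_space \<Rightarrow> 'w) \<Rightarrow> 'w set \<Rightarrow> bool" where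
  "cl0_submodule p q act U \<longleftrightarrow> subspace U \<and> (\<forall>x\<in>Cl0 (p+q). \<forall>u\<in>U. act x u \<in> U)"

definition cl0_irreducible :: "nat \<Rightarrow> nat \<Rightarrow> ((nat set \<Rightarrow> real) \<Rightarrow> 'w::euclidean_space \<Rightarrow> 'w) \<Rightarrow> 'w set \<Rightarrow> bool" where
  "cl0_irreducible p q act U \<longleftrightarrow> cl0_submodule p q act U \<and> U \<noteq> {0} \<and>
     (\<forall>U'. cl0_submodule p q act U' \<and> U' \<subseteq> U \<longrightarrow> U' = {0} \<or> U' = U)"

text \<open>A linear map Pmap : wedge^2 W --> V is represented (universal property of the exterior
  square) by the alternating bilinear map (s,t) |-> Pmap(s wedge t).\<close>
definition wedge2_map :: "nat \<Rightarrow> ('w::euclidean_space \<Rightarrow> 'w \<Rightarrow> nat \<Rightarrow> real) \<Rightarrow> bool" where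
  "wedge2_map n Pmap \<longleftrightarrow>
     (\<forall>s t. Pmap s t \<in> Vset n) \<and>
     (\<forall>s s' t. Pmap (s + s') t = (\<lambda>i. Pmap s t i + Pmap s' t i)) \<and>
     (\<forall>s t c. Pmap (c *\<^sub>R s) t = (\<lambda>i. c * Pmap s t i)) \<and>
     (\<forall>s t t'. Pmap s (t + t') = (\<lambda>i. Pmap s t i + Pmap s t' i)) \<and>
     (\<forall>s t c. Pmap s (c *\<^sub>R t) = (\<lambda>i. c * Pmap s t i)) \<and>
     (\<forall>s. Pmap s s = (\<lambda>i. 0))"

text \<open>o(V)-equivariance: Pmap(A s wedge t + s wedge A t) = A (Pmap (s wedge t)) for A = x wedge y,
  where A acts on W through spin(V) inside Cl^0(V).\<close>
definition oV_equivariant :: "nat \<Rightarrow> nat \<Rightarrow> ((nat set \<Rightarrow> real) \<Rightarrow> 'w::euclidean_space \<Rightarrow> 'w)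
    \<Rightarrow> ('w \<Rightarrow> 'w \<Rightarrow> nat \<Rightarrow> real) \<Rightarrow> bool" where
  "oV_equivariant p q act Pmap \<longleftrightarrow>
     (\<forall>x\<in>Vset (p+q). \<forall>y\<in>Vset (p+q). \<forall>s t.
        (\<lambda>i. Pmap (act (spin p q x y) s) t i + Pmap s (act (spin p q x y) t) i)
          = oV_act p q x y (Pmap s t))"

text \<open>b(s,t) = < e_1, Pmap(e_2 ... e_{p'} s wedge t) >; with 0-based indices e_2 ... e_{p'}
  is the blade on {1..<p'}.\<close>
definition bform :: "nat \<Rightarrow> nat \<Rightarrow> nat \<Rightarrow> ((nat set \<Rightarrow> real) \<Rightarrow> 'w::euclidean_space \<Rightarrow> 'w)
    \<Rightarrow> ('w \<Rightarrow> 'w \<Rightarrow> nat \<Rightarrow> real) \<Rightarrow> 'w \<Rightarrow> 'w \<Rightarrow> real" where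
  "bform p q p' act Pmap s t = ip p q (stdbasis 0) (Pmap (act (cl_blade {1..<p'}) s) t)"

definition Pi_image :: "('w::euclidean_space \<Rightarrow> 'w \<Rightarrow> nat \<Rightarrow> real) \<Rightarrow> 'w set \<Rightarrow> (nat \<Rightarrow> real) set" where
  "Pi_image Pmap U = {v. \<exists>(k::nat) s t. (\<forall>j<k. s j \<in> U \<and> t j \<in> U) \<and> v = (\<lambda>i. \<Sum>j<k. Pmap (s j) (t j) i)}"

end

theory Submission
  imports Defs
begin

text \<open>Write \<open>\<beta> s t = \<langle>e\<^sub>1, \<Pi>(s \<and> t)\<rangle>\<close> and \<open>E\<close> for the action of \<open>e\<^sub>2 \<cdots> e\<^sub>p\<^sub>'\<close>, so that
  \<open>b s t = \<beta> (E s) t\<close>.  Equivariance under \<open>e\<^sub>i \<and> e\<^sub>j\<close> makes \<open>e\<^sub>i e\<^sub>j\<close> skew for \<open>\<beta>\<close> when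
  \<open>1 < i < j\<close> and \<open>e\<^sub>1 e\<^sub>j\<close> symmetric, and expresses every component of \<open>\<Pi>\<close> through \<open>\<beta>\<close>.  As \<open>E\<close> is
  a product of \<open>(p' - 1) / 2\<close> skew pair blades, an odd number, \<open>b\<close> is symmetric; the same relations
  show that \<open>b\<close>-orthogonals of submodules are submodules and that \<open>\<Pi>\<close> vanishes on \<open>b\<close>-orthogonal
  pairs of submodules.  Complements of submodules exist for an inner product averaged over the
  blades.

  The decomposition is then linear algebra: split off the radical \<open>W\<^sub>0\<close>, peel off non-isotropic
  irreducible submodules, on which \<open>b\<close> is nondegenerate, one orthogonal summand at a time, and pair
  each remaining (isotropic) irreducible \<open>X\<close> with an irreducible \<open>X'\<close> on which \<open>b\<close> pairs
  nondegenerately with \<open>X\<close>, so that \<open>X \<oplus> X'\<close> is nondegenerate.  Finally \<open>\<Pi>(\<and>\<^sup>2 W\<^sub>i)\<close> is an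
  \<open>o(V)\<close>-invariant subspace containing a vector with nonzero first coordinate, hence all of \<open>V\<close>.\<close>

section \<open>Blades in the Clifford algebra\<close>

lemma cl_mult_blade:
  assumes "S \<subseteq> {..<p+q}" "T \<subseteq> {..<p+q}"
  shows "cl_mult p q (cl_blade S) (cl_blade T) = (\<lambda>U. blade_coeff p S T * cl_blade (sym_diff S T) U)"
proof
  fix U
  define c where "c = (if sym_diff S T = U then blade_coeff p S T else 0)"
  have "(if sym_diff S' T' = U then cl_blade S S' * cl_blade T T' * blade_coeff p S' T' else 0)
      = (if S' = S then if T' = T then c else 0 else 0)" for S' T'
    by (simp add: cl_blade_def c_def cong: if_cong)
  then have "cl_mult p q (cl_blade S) (cl_blade T) U =
      (\<Sum>S'\<in>Pow {..<p+q}. \<Sum>T'\<in>Pow {..<p+q}. if S' = S then if T' = T then c else 0 else 0)"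
    unfolding cl_mult_def by presburger
  also have "\<dots> = (\<Sum>S'\<in>Pow {..<p+q}. if S' = S then c else 0)"
    using assms(2) by (intro sum.cong) auto
  also have "\<dots> = c"
    using assms(1) by simp
  finally show "cl_mult p q (cl_blade S) (cl_blade T) U = blade_coeff p S T * cl_blade (sym_diff S T) U"
    by (auto simp: c_def cl_blade_def)
qed

lemma blade_coeff_square: "blade_coeff p S T * blade_coeff p S T = 1"
proof -
  have "(\<Prod>i\<in>S \<inter> T. - sgnpq p i) * (\<Prod>i\<in>S \<inter> T. - sgnpq p i) = (\<Prod>i\<in>S \<inter> T. (- sgnpq p i) * (- sgnpq p i))"
    by (rule prod.distrib[symmetric])
  also have "\<dots> = 1" by (intro prod.neutral) (simp add: sgnpq_def)
  finally show ?thesis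
    unfolding blade_coeff_def by (simp add: algebra_simps flip: power_add mult_2)
qed

lemma cl_one_eq_blade_empty: "cl_one = cl_blade {}"
  by (auto simp: cl_one_def cl_blade_def)

lemma cl_blade_in_Cl0: "S \<subseteq> {..<n} \<Longrightarrow> even (card S) \<Longrightarrow> cl_blade S \<in> Cl0 n"
  by (auto simp: Cl0_def Cl_def cl_blade_def)

lemma cl_vec_stdbasis: "i < n \<Longrightarrow> cl_vec n (stdbasis i) = cl_blade {i}"
  by (auto simp: cl_vec_def cl_blade_def stdbasis_def fun_eq_iff)

lemma sgnpq_square: "sgnpq p i * sgnpq p i = 1"
  by (simp add: sgnpq_def)

lemma sgnpq_0: "0 < p \<Longrightarrow> sgnpq p 0 = 1"
  by (simp add: sgnpq_def)

lemma sgnpq_nonzero: "sgnpq p i \<noteq> 0"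
  by (simp add: sgnpq_def)

lemma ip_stdbasis: "i < p + q \<Longrightarrow> ip p q (stdbasis i) z = sgnpq p i * z i"
proof -
  assume "i < p + q"
  moreover have "ip p q (stdbasis i) z = (\<Sum>k<p+q. if k = i then sgnpq p i * z i else 0)"
    unfolding ip_def stdbasis_def by (intro sum.cong) auto
  ultimately show ?thesis by simp
qed

lemma even_card_symdiff:
  assumes "finite S" "finite T" "even (card S)" "even (card T)"
  shows "even (card (sym_diff S T))"
proof -
  have "(S - T) \<union> (T - S) = (S \<union> T) - (S \<inter> T)" by blast
  moreover have "card (S \<union> T) + card (S \<inter> T) = card S + card T"
    using card_Un_Int[OF assms(1,2)] by simp
  moreover have "card (S \<inter> T) \<le> card (S \<union> T)" using assms(1,2) by (intro card_mono) auto
  moreover have "card ((S \<union> T) - (S \<inter> T)) = card (S \<union> T) - card (S \<inter> T)"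
    using assms(1,2) by (intro card_Diff_subset) auto
  ultimately have "card (sym_diff S T) + 2 * card (S \<inter> T) = card S + card T"
    by simp
  then show ?thesis using assms(3,4) by presburger
qed

lemma blade_coeff_singletons:
  assumes "i < j"
  shows "blade_coeff p {i} {j} = 1" and "blade_coeff p {j} {i} = -1"
proof -
  have "{(s, t). s \<in> {i} \<and> t \<in> {j} \<and> t < s} = {}" "{(s, t). s \<in> {j} \<and> t \<in> {i} \<and> t < s} = {(j, i)}"
    using assms by auto
  then show "blade_coeff p {i} {j} = 1" "blade_coeff p {j} {i} = -1"
    unfolding blade_coeff_def using assms by (simp_all only:) simp_all
qed

lemma blade_coeff_pair_0_square:
  assumes "0 < j" "0 < p"
  shows "blade_coeff p {0, j} {0, j} = - sgnpq p j"
proof -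
  have "{(s, t). s \<in> {0, j} \<and> t \<in> {0, j} \<and> t < s} = {(j, 0::nat)}" using assms by auto
  then show ?thesis unfolding blade_coeff_def using assms by (simp add: sgnpq_0)
qed

lemma blade_coeff_interval_pair: "blade_coeff p {1..<2*r+1} {2*r+1, 2*r+2} = 1"
proof -
  have "{(s, t). s \<in> {1..<2*r+1} \<and> t \<in> {2*r+1, 2*r+2} \<and> t < s} = {}"
    and "{1..<2*r+1} \<inter> {2*r+1, 2*r+2} = {}" by auto
  then show ?thesis unfolding blade_coeff_def by (simp only:) simp
qed

lemma blade_coeff_pair_interval: "blade_coeff p {2*r+1, 2*r+2} {1..<2*r+1} = 1"
proof -
  have "{(s, t). s \<in> {2*r+1, 2*r+2} \<and> t \<in> {1..<2*r+1} \<and> t < s} = {2*r+1, 2*r+2} \<times> {1..<2*r+1}"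
    and "{2*r+1, 2*r+2} \<inter> {1..<2*r+1} = {}" by auto
  then show ?thesis unfolding blade_coeff_def by (simp only:) (simp add: card_cartesian_product)
qed

lemma sym_diff_interval_pair: "sym_diff {1..<2*r+1} {2*r+1, 2*r+2} = {1..<2 * Suc r + 1}"
  by auto

lemma zero_in_sum_list:
  fixes Ws :: "'a::comm_monoid_add set list"
  shows "\<forall>V\<in>set Ws. 0 \<in> V \<Longrightarrow> 0 \<in> sum_list Ws"
  by (induction Ws) (auto dest: set_plus_intro[of 0 _ 0])

lemma member_sum_list_subset:
  fixes Ws :: "'a::comm_monoid_add set list"
  assumes "W \<in> set Ws" "\<forall>V\<in>set Ws. 0 \<in> V"
  shows "W \<subseteq> sum_list Ws"
  using assms
proof (induction Ws)
  case (Cons V Ws)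
  then show ?case
    using set_zero_plus2[of V "sum_list Ws"] set_zero_plus2[of "sum_list Ws" V] zero_in_sum_list[of Ws]
    by (auto simp: add.commute)
qed simp

lemma sum_list_set_eq_indexed_sums:
  fixes Ws :: "'a::comm_monoid_add set list"
  shows "sum_list Ws = {\<Sum>i<length Ws. f i | f. \<forall>i<length Ws. f i \<in> Ws ! i}"
proof (induction Ws)
  case Nil
  then show ?case by simp
next
  case (Cons V Ws)
  show ?case
  proof (intro subset_antisym subsetI)
    fix x assume "x \<in> sum_list (V # Ws)"
    then obtain v w where vw: "v \<in> V" "w \<in> sum_list Ws" "x = v + w"
      by (auto elim: set_plus_elim)
    then obtain f where f: "\<forall>i<length Ws. f i \<in> Ws ! i" "w = (\<Sum>i<length Ws. f i)"
      using Cons.IH by blast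
    have "x = (\<Sum>i<length (V # Ws). case_nat v f i)"
      unfolding vw(3) f(2) by (simp only: length_Cons sum.lessThan_Suc_shift nat.case)
    moreover have "\<forall>i<length (V # Ws). case_nat v f i \<in> (V # Ws) ! i"
      using vw(1) f(1) by (auto split: nat.split)
    ultimately show "x \<in> {\<Sum>i<length (V # Ws). f i | f. \<forall>i<length (V # Ws). f i \<in> (V # Ws) ! i}"
      by blast
  next
    fix x assume "x \<in> {\<Sum>i<length (V # Ws). f i | f. \<forall>i<length (V # Ws). f i \<in> (V # Ws) ! i}"
    then obtain f where f: "\<forall>i<Suc (length Ws). f i \<in> (V # Ws) ! i" "x = (\<Sum>i<Suc (length Ws). f i)"
      by auto
    then have x: "x = f 0 + (\<Sum>i<length Ws. f (Suc i))"
      by (simp only: sum.lessThan_Suc_shift)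
    have "\<forall>i<length Ws. f (Suc i) \<in> Ws ! i"
      using f(1) by auto
    then have "(\<Sum>i<length Ws. f (Suc i)) \<in> sum_list Ws"
      unfolding Cons.IH by blast
    moreover have "f 0 \<in> V" using f(1) by auto
    ultimately show "x \<in> sum_list (V # Ws)"
      using x by (simp add: set_plus_intro)
  qed
qed

lemma set_plus_eq_sums: "A + B = {a + b | a b. a \<in> A \<and> b \<in> B}"
  by (auto simp: set_plus_def)

lemma subspace_set_plus: "subspace A \<Longrightarrow> subspace B \<Longrightarrow> subspace (A + B)"
  unfolding set_plus_eq_sums by (rule subspace_sums)

lemma subspace_sum_list: "\<forall>W\<in>set Ws. subspace W \<Longrightarrow> subspace (sum_list Ws)"
  by (induction Ws) (simp_all add: subspace_set_plus)

lemma indexed_sums_subset_subspace: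
  assumes "subspace S" "\<And>j. j \<in> J \<Longrightarrow> W j \<subseteq> S"
  shows "{\<Sum>j\<in>J. f j | f. \<forall>j\<in>J. f j \<in> W j} \<subseteq> S"
proof
  fix x assume "x \<in> {\<Sum>j\<in>J. f j | f. \<forall>j\<in>J. f j \<in> W j}"
  then obtain f where "\<forall>j\<in>J. f j \<in> W j" "x = (\<Sum>j\<in>J. f j)" by blast
  then show "x \<in> S" using subspace_sum[OF assms(1), of J f] assms(2) by blast
qed

lemma nth_Cons_append_mem:
  shows "i \<in> {1..length xs} \<Longrightarrow> (x # xs @ ys) ! i \<in> set xs"
    and "i \<in> {length xs + 1..length xs + length ys} \<Longrightarrow> (x # xs @ ys) ! i \<in> set ys"
    and "i \<in> {1..length xs + length ys} \<Longrightarrow> (x # xs @ ys) ! i \<in> set (xs @ ys)"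
proof -
  assume "i \<in> {1..length xs}"
  then show "(x # xs @ ys) ! i \<in> set xs" by (cases i) (auto simp: nth_append)
next
  assume "i \<in> {length xs + 1..length xs + length ys}"
  then show "(x # xs @ ys) ! i \<in> set ys" by (cases i) (auto simp: nth_append)
next
  assume "i \<in> {1..length xs + length ys}"
  then show "(x # xs @ ys) ! i \<in> set (xs @ ys)" by (cases i) (simp_all del: set_append)
qed

lemma sum_lessThan_add_split: "(\<Sum>j<a + b. f j) = (\<Sum>j<a. f j) + (\<Sum>j<b. f (a + j))" for a b :: nat
  by (induction b) (simp_all add: add.assoc)

section \<open>Orthogonal decomposition for an invariant symmetric form\<close>

lemma linear_inj_on_subspace_onto:
  fixes f :: "'a::euclidean_space \<Rightarrow> 'a"
  assumes "linear f" "subspace U" "f ` U \<subseteq> U" "inj_on f U"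
  shows "f ` U = U"
proof -
  have "dim (f ` U) = dim U"
    using dim_image_eq[OF assms(1)] assms(2,4) span_eq_iff by metis
  then show ?thesis
    using subspace_dim_equal[OF linear_subspace_image[OF assms(1,2)] assms(2,3)] by simp
qed

text \<open>For a basis \<open>B\<close> of \<open>U\<close>, the map \<open>y \<mapsto> \<Sum>e\<in>B. c y e *\<^sub>R e\<close> is injective on \<open>U\<close> by
  nondegeneracy, hence onto \<open>U\<close>, and its fibres are the classes of equal functionals \<open>c y\<close> on \<open>U\<close>.\<close>

lemma nondegenerate_form_represents:
  fixes c :: "'w::euclidean_space \<Rightarrow> 'w \<Rightarrow> real"
  assumes lin1: "\<And>t. linear (\<lambda>s. c s t)" and lin2: "\<And>s. linear (\<lambda>t. c s t)"
    and U: "subspace U" and nondeg: "\<And>u. u \<in> U \<Longrightarrow> (\<forall>t\<in>U. c u t = 0) \<Longrightarrow> u = 0"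
  shows "\<exists>u\<in>U. \<forall>t\<in>U. c y t = c u t"
proof -
  obtain B where B: "B \<subseteq> U" "independent B" "U \<subseteq> span B"
    by (rule basis_exists)
  have spanB: "span B = U"
    using B(1,3) span_mono[OF B(1)] U span_eq_iff by blast
  define \<phi> where "\<phi> y = (\<Sum>e\<in>B. c y e *\<^sub>R e)" for y
  have linear_\<phi>: "linear \<phi>"
    unfolding \<phi>_def by (rule linearI)
      (simp_all add: linear_add[OF lin1] linear_scale[OF lin1] scaleR_add_left sum.distrib scaleR_sum_right)
  have \<phi>_U: "\<phi> y \<in> U" for y
    unfolding \<phi>_def using B(1) U by (auto intro!: subspace_sum subspace_scale)
  have \<phi>_eq: "\<forall>t\<in>U. c x t = c y t" if "\<phi> x = \<phi> y" for x y
  proof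
    have "(\<Sum>e\<in>B. (c x e - c y e) *\<^sub>R e) = 0"
      using that unfolding \<phi>_def by (simp add: scaleR_diff_left sum_subtractf)
    then have on_B: "\<forall>e\<in>B. c x e = c y e"
      using B(2) unfolding independent_explicit
      by (elim conjE allE[of _ "\<lambda>e. c x e - c y e"]) auto
    fix t assume "t \<in> U"
    then have "t \<in> span B" using spanB by simp
    then show "c x t = c y t"
      by (rule linear_eq_on[OF lin2[of x] lin2[of y]]) (use on_B in simp)
  qed
  have "inj_on \<phi> U"
  proof (rule inj_onI)
    fix x y assume xy: "x \<in> U" "y \<in> U" "\<phi> x = \<phi> y"
    have "\<forall>t\<in>U. c (x - y) t = 0"
      using \<phi>_eq[OF xy(3)] by (simp add: linear_diff[OF lin1])
    then have "x - y = 0"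
      using nondeg[of "x - y"] U xy subspace_diff by blast
    then show "x = y" by simp
  qed
  then have "\<phi> ` U = U"
    using linear_inj_on_subspace_onto[OF linear_\<phi> U] \<phi>_U by blast
  then obtain u where "u \<in> U" "\<phi> u = \<phi> y"
    using \<phi>_U by (metis imageE)
  then show ?thesis using \<phi>_eq[of y u] by auto
qed

locale invariant_form =
  fixes submodule :: "'w::euclidean_space set \<Rightarrow> bool" and b :: "'w \<Rightarrow> 'w \<Rightarrow> real"
  assumes submodule_subspace: "submodule U \<Longrightarrow> subspace U"
    and submodule_Int: "submodule U \<Longrightarrow> submodule V \<Longrightarrow> submodule (U \<inter> V)"
    and submodule_plus: "submodule U \<Longrightarrow> submodule V \<Longrightarrow> submodule (U + V)"
    and submodule_b_orth: "submodule U \<Longrightarrow> submodule {t. \<forall>s\<in>U. b s t = 0}"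
    and submodule_UNIV: "submodule UNIV"
    and submodule_complement: "submodule U \<Longrightarrow> submodule Y \<Longrightarrow> U \<subseteq> Y \<Longrightarrow>
       \<exists>C. submodule C \<and> C \<subseteq> Y \<and> U \<inter> C = {0} \<and> Y \<subseteq> U + C"
    and linear_b: "linear (\<lambda>s. b s t)"
    and b_sym: "b s t = b t s"
begin

definition perp :: "'w set \<Rightarrow> 'w set" where
  "perp U = {t. \<forall>s\<in>U. b s t = 0}"

definition b_orthogonal :: "'w set \<Rightarrow> 'w set \<Rightarrow> bool" where
  "b_orthogonal U V \<longleftrightarrow> (\<forall>s\<in>U. \<forall>t\<in>V. b s t = 0)"

definition b_radical :: "'w set" where
  "b_radical = {s. \<forall>t. b s t = 0}"

definition nondegenerate :: "'w set \<Rightarrow> bool" where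
  "nondegenerate Y \<longleftrightarrow> (\<forall>s\<in>Y. (\<forall>t\<in>Y. b s t = 0) \<longrightarrow> s = 0)"

definition isotropic :: "'w set \<Rightarrow> bool" where
  "isotropic U \<longleftrightarrow> b_orthogonal U U"

definition irreducible_submodule :: "'w set \<Rightarrow> bool" where
  "irreducible_submodule U \<longleftrightarrow>
     submodule U \<and> U \<noteq> {0} \<and> (\<forall>U'. submodule U' \<and> U' \<subseteq> U \<longrightarrow> U' = {0} \<or> U' = U)"

definition hyperbolic :: "'w set \<Rightarrow> bool" where
  "hyperbolic H \<longleftrightarrow> (\<exists>X X'. irreducible_submodule X \<and> irreducible_submodule X' \<and>
      isotropic X \<and> isotropic X' \<and> X \<inter> X' = {0} \<and> H = X + X')"

definition nondegenerate_pairing :: "'w set \<Rightarrow> 'w set \<Rightarrow> bool" where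
  "nondegenerate_pairing X X' \<longleftrightarrow>
     (\<forall>x\<in>X. (\<forall>x'\<in>X'. b x x' = 0) \<longrightarrow> x = 0) \<and> (\<forall>x'\<in>X'. (\<forall>x\<in>X. b x x' = 0) \<longrightarrow> x' = 0)"

abbreviation pairwise_orthogonal :: "'w set list \<Rightarrow> bool" where
  "pairwise_orthogonal Ws \<equiv> sorted_wrt b_orthogonal Ws"

lemma linear_b_right: "linear (\<lambda>t. b s t)"
  using linear_b[of s] by (simp add: b_sym)

lemma b_add_left: "b (x + y) t = b x t + b y t"
  using linear_add[OF linear_b] .

lemma b_add_right: "b s (x + y) = b s x + b s y"
  using linear_add[OF linear_b_right] .

lemma b_diff_left: "b (x - y) t = b x t - b y t"
  using linear_diff[OF linear_b] .

lemma b_zero_left: "b 0 t = 0"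
  using linear_0[OF linear_b] .

lemma b_sum_left: "b (\<Sum>i\<in>I. f i) t = (\<Sum>i\<in>I. b (f i) t)"
  using linear_sum[OF linear_b] .

lemma b_orthogonal_sym: "b_orthogonal U V \<longleftrightarrow> b_orthogonal V U"
  unfolding b_orthogonal_def by (subst b_sym) blast

lemma b_orthogonal_mono: "b_orthogonal U V \<Longrightarrow> U' \<subseteq> U \<Longrightarrow> V' \<subseteq> V \<Longrightarrow> b_orthogonal U' V'"
  unfolding b_orthogonal_def by blast

lemma b_orthogonal_perp: "V \<subseteq> perp U \<Longrightarrow> b_orthogonal U V"
  unfolding b_orthogonal_def perp_def by blast

lemma b_orthogonal_radical: "b_orthogonal b_radical V"
  unfolding b_orthogonal_def b_radical_def by blast

lemma submodule_perp: "submodule U \<Longrightarrow> submodule (perp U)"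
  unfolding perp_def by (rule submodule_b_orth)

lemma submodule_b_radical: "submodule b_radical"
proof -
  have "b_radical = perp UNIV"
    unfolding b_radical_def perp_def using b_sym by auto
  then show ?thesis using submodule_perp[OF submodule_UNIV] by simp
qed

lemma submodule_zero: "submodule U \<Longrightarrow> 0 \<in> U"
  using submodule_subspace subspace_0 by blast

lemma irreducible_submodule_exists:
  assumes "submodule Y" "Y \<noteq> {0}"
  obtains U where "irreducible_submodule U" "U \<subseteq> Y"
proof -
  define P where "P d \<longleftrightarrow> (\<exists>U. submodule U \<and> U \<subseteq> Y \<and> U \<noteq> {0} \<and> dim U = d)" for d
  have "P (dim Y)" using assms unfolding P_def by blast
  then obtain d where d: "P d" "\<And>d'. P d' \<Longrightarrow> d \<le> d'"
    using ex_has_least_nat[of P "dim Y" id] by auto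
  then obtain U where U: "submodule U" "U \<subseteq> Y" "U \<noteq> {0}" "dim U = d"
    unfolding P_def by blast
  have "U' = {0} \<or> U' = U" if "submodule U'" "U' \<subseteq> U" for U'
  proof (cases "U' = {0}")
    case False
    then have "dim U \<le> dim U'" using d(2) U that unfolding P_def by blast
    then show ?thesis using subspace_dim_equal submodule_subspace that U(1) by blast
  qed simp
  then show ?thesis using that U unfolding irreducible_submodule_def by blast
qed

lemma nondegenerate_split:
  assumes U: "submodule U" "nondegenerate U" and UY: "U \<subseteq> Y" and Y: "submodule Y"
  shows "Y = U + (Y \<inter> perp U)"
proof
  show "U + (Y \<inter> perp U) \<subseteq> Y"
    using UY submodule_subspace[OF Y] subspace_add by (auto simp: set_plus_def)
next
  show "Y \<subseteq> U + (Y \<inter> perp U)"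
  proof
    fix y assume y: "y \<in> Y"
    obtain u where u: "u \<in> U" "\<forall>t\<in>U. b y t = b u t"
      using nondegenerate_form_represents[of b U y] linear_b linear_b_right submodule_subspace U
      unfolding nondegenerate_def by blast
    have "y - u \<in> Y" using y u(1) UY submodule_subspace[OF Y] subspace_diff by blast
    moreover have "y - u \<in> perp U"
      unfolding perp_def using u(2) by (auto simp: b_sym[of _ "y - u"] b_diff_left)
    ultimately show "y \<in> U + (Y \<inter> perp U)"
      using u(1) set_plus_intro[of u U "y - u"] by auto
  qed
qed

lemma nondegenerate_Int_perp:
  assumes U: "submodule U" "nondegenerate U" and UY: "U \<subseteq> Y"
    and Y: "submodule Y" "nondegenerate Y"
  shows "nondegenerate (Y \<inter> perp U)"
  unfolding nondegenerate_def
proof (intro ballI impI)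
  fix s assume s: "s \<in> Y \<inter> perp U" and s_perp: "\<forall>t\<in>Y \<inter> perp U. b s t = 0"
  have "b s y = 0" if "y \<in> Y" for y
  proof -
    have "y \<in> U + (Y \<inter> perp U)"
      using nondegenerate_split[OF U UY Y(1)] that by blast
    then obtain u w where "u \<in> U" "w \<in> Y \<inter> perp U" "y = u + w"
      by (rule set_plus_elim)
    then show ?thesis using s s_perp unfolding perp_def by (simp add: b_add_right b_sym[of s u])
  qed
  then show "s = 0" using Y(2) s unfolding nondegenerate_def by blast
qed

lemma dim_Int_perp_less:
  assumes U: "submodule U" "nondegenerate U" "U \<noteq> {0}" and UY: "U \<subseteq> Y" and Y: "submodule Y"
  shows "dim (Y \<inter> perp U) < dim Y"
proof -
  obtain u where u: "u \<in> U" "u \<noteq> 0" using U(1,3) submodule_zero by blast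
  have "u \<notin> perp U"
    using U(2) u unfolding nondegenerate_def perp_def by (auto simp: b_sym[of u])
  then have "Y \<inter> perp U \<subset> Y" using u UY by blast
  moreover have "subspace (Y \<inter> perp U)"
    using submodule_subspace submodule_Int[OF Y submodule_perp[OF U(1)]] by blast
  ultimately show ?thesis
    using dim_psubset[of "Y \<inter> perp U" Y] submodule_subspace[OF Y] span_eq_iff by metis
qed

lemma irreducible_nondegenerate:
  assumes "irreducible_submodule U" "\<not> isotropic U"
  shows "nondegenerate U"
proof -
  have "submodule U" using assms(1) irreducible_submodule_def by blast
  then have "U \<inter> perp U = {0} \<or> U \<inter> perp U = U"
    using assms(1) submodule_Int submodule_perp unfolding irreducible_submodule_def by blast
  moreover have "U \<inter> perp U \<noteq> U"
    using assms(2) unfolding isotropic_def b_orthogonal_def perp_def by blast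
  ultimately show ?thesis
    unfolding nondegenerate_def perp_def by (auto simp: b_sym)
qed

lemma orthogonal_peeling:
  assumes "submodule Y" "nondegenerate Y"
    and step: "\<And>Y'. submodule Y' \<Longrightarrow> nondegenerate Y' \<Longrightarrow> Y' \<subseteq> Y \<Longrightarrow> \<not> stop Y' \<Longrightarrow>
       \<exists>H. P H \<and> submodule H \<and> nondegenerate H \<and> H \<noteq> {0} \<and> H \<subseteq> Y'"
  shows "\<exists>Hs Z. (\<forall>H\<in>set Hs. P H \<and> submodule H \<and> nondegenerate H) \<and>
     submodule Z \<and> nondegenerate Z \<and> stop Z \<and> pairwise_orthogonal (Z # Hs) \<and> Y = sum_list (Z # Hs)"
  using assms
proof (induction "dim Y" arbitrary: Y rule: less_induct)
  case less
  show ?case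
  proof (cases "stop Y")
    case True
    then show ?thesis using less.prems(1,2) by (intro exI[of _ "[]"] exI[of _ Y]) simp
  next
    case False
    then obtain H where H: "P H" "submodule H" "nondegenerate H" "H \<noteq> {0}" "H \<subseteq> Y"
      using less.prems by blast
    define Y' where "Y' = Y \<inter> perp H"
    have Y': "submodule Y'" "nondegenerate Y'" "dim Y' < dim Y" "Y' \<subseteq> Y"
      unfolding Y'_def
      using submodule_Int[OF less.prems(1) submodule_perp[OF H(2)]]
        nondegenerate_Int_perp[OF H(2,3,5) less.prems(1,2)]
        dim_Int_perp_less[OF H(2,3,4,5) less.prems(1)] by auto
    obtain Hs Z where IH: "\<forall>H\<in>set Hs. P H \<and> submodule H \<and> nondegenerate H"
      "submodule Z" "nondegenerate Z" "stop Z" "pairwise_orthogonal (Z # Hs)" "Y' = sum_list (Z # Hs)"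
      using less.hyps[OF Y'(3) Y'(1,2)] less.prems(3) Y'(4) by blast
    have "W \<subseteq> Y'" if "W \<in> set (Z # Hs)" for W
      unfolding IH(6) using that IH(1,2) submodule_zero by (intro member_sum_list_subset) auto
    then have "b_orthogonal H W" if "W \<in> set (Z # Hs)" for W
      using that unfolding Y'_def by (meson b_orthogonal_perp inf.boundedE)
    then have "pairwise_orthogonal (Z # H # Hs)"
      using IH(5) b_orthogonal_sym by auto
    moreover have "Y = sum_list (Z # H # Hs)"
      using nondegenerate_split[OF H(2,3,5) less.prems(1)] IH(6) unfolding Y'_def
      by (simp add: add.left_commute)
    ultimately show ?thesis
      using IH(1-4) H by (intro exI[of _ "H # Hs"] exI[of _ Z]) auto
  qed
qed

lemma pairing_partner_exists:
  assumes Z: "submodule Z" "nondegenerate Z" and X: "irreducible_submodule X" "X \<subseteq> Z"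
  obtains X' where "irreducible_submodule X'" "X' \<subseteq> Z" "\<forall>x'\<in>X'. (\<forall>x\<in>X. b x x' = 0) \<longrightarrow> x' = 0"
proof -
  have X_submodule: "submodule X" and X0: "X \<noteq> {0}"
    using X(1) unfolding irreducible_submodule_def by auto
  define K where "K = Z \<inter> perp X"
  obtain C where C: "submodule C" "C \<subseteq> Z" "K \<inter> C = {0}" "Z \<subseteq> K + C"
    using submodule_complement[OF submodule_Int[OF Z(1) submodule_perp[OF X_submodule]] Z(1)]
    unfolding K_def by blast
  have "C \<noteq> {0}"
  proof
    assume "C = {0}"
    then have "Z \<subseteq> perp X" using C(4) unfolding K_def by (auto simp: set_plus_def)
    moreover obtain x where "x \<in> X" "x \<noteq> 0" using X0 submodule_zero[OF X_submodule] by blast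
    ultimately show False using Z(2) X(2) unfolding nondegenerate_def perp_def by blast
  qed
  then obtain X' where X': "irreducible_submodule X'" "X' \<subseteq> C"
    using irreducible_submodule_exists[OF C(1)] by blast
  have "x' = 0" if "x' \<in> X'" "\<forall>x\<in>X. b x x' = 0" for x'
  proof -
    have "x' \<in> K" unfolding K_def perp_def using that X'(2) C(2) by blast
    then show ?thesis using C(3) X'(2) that(1) by blast
  qed
  with X' C(2) show ?thesis using that by blast
qed

lemma irreducible_pairing_nondegenerate:
  assumes X: "irreducible_submodule X" and X': "submodule X'" "X' \<noteq> {0}"
    and right: "\<forall>x'\<in>X'. (\<forall>x\<in>X. b x x' = 0) \<longrightarrow> x' = 0"
  shows "nondegenerate_pairing X X'"
proof -
  have "X \<inter> perp X' = {0} \<or> X \<inter> perp X' = X"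
    using X submodule_Int submodule_perp[OF X'(1)] unfolding irreducible_submodule_def by blast
  moreover have "X \<inter> perp X' \<noteq> X"
  proof
    assume "X \<inter> perp X' = X"
    then have "b x x' = 0" if "x \<in> X" "x' \<in> X'" for x x'
    proof -
      have "x \<in> perp X'" using \<open>X \<inter> perp X' = X\<close> that(1) by blast
      then show ?thesis using that(2) b_sym[of x x'] unfolding perp_def by simp
    qed
    then have "\<forall>x'\<in>X'. x' = 0" using right by blast
    then show False using X'(2) submodule_zero[OF X'(1)] by blast
  qed
  ultimately have "X \<inter> perp X' = {0}" by blast
  moreover have "x \<in> perp X'" if "\<forall>x'\<in>X'. b x x' = 0" for x
    using that b_sym[of x] unfolding perp_def by auto
  ultimately show ?thesis using right unfolding nondegenerate_pairing_def by blast
qed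

lemma hyperbolic_sum_nondegenerate:
  assumes X: "submodule X" "isotropic X" and X': "submodule X'" "isotropic X'"
    and pairing: "nondegenerate_pairing X X'"
  shows "X \<inter> X' = {0}" and "nondegenerate (X + X')"
proof -
  show "X \<inter> X' = {0}"
    using X X' pairing submodule_zero
    unfolding isotropic_def b_orthogonal_def nondegenerate_pairing_def by blast
  show "nondegenerate (X + X')"
    unfolding nondegenerate_def
  proof (intro ballI impI)
    fix h assume h: "h \<in> X + X'" and h_perp: "\<forall>t\<in>X + X'. b h t = 0"
    from h obtain x x' where xx': "x \<in> X" "x' \<in> X'" "h = x + x'" by (rule set_plus_elim)
    have "X \<subseteq> X + X'" "X' \<subseteq> X + X'"
      using set_zero_plus2[OF submodule_zero[OF X'(1)], of X]
        set_zero_plus2[OF submodule_zero[OF X(1)], of X'] by (simp_all add: add.commute)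
    have "b y x' = 0" if "y \<in> X" for y
    proof -
      have "b h y = 0" "b x y = 0"
        using h_perp that \<open>X \<subseteq> X + X'\<close> X(2) xx'(1) unfolding isotropic_def b_orthogonal_def by blast+
      then show ?thesis using xx'(3) by (simp add: b_add_left b_sym[of y])
    qed
    moreover have "b x y' = 0" if "y' \<in> X'" for y'
    proof -
      have "b h y' = 0" "b x' y' = 0"
        using h_perp that \<open>X' \<subseteq> X + X'\<close> X'(2) xx'(2) unfolding isotropic_def b_orthogonal_def by blast+
      then show ?thesis using xx'(3) by (simp add: b_add_left)
    qed
    ultimately have "x = 0" "x' = 0"
      using pairing xx'(1,2) unfolding nondegenerate_pairing_def by blast+
    then show "h = 0" using xx'(3) by simp
  qed
qed

lemma hyperbolic_submodule_exists:
  assumes Z: "submodule Z" "nondegenerate Z" "Z \<noteq> {0}"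
    and Z_isotropic: "\<forall>U. irreducible_submodule U \<and> U \<subseteq> Z \<longrightarrow> isotropic U"
  shows "\<exists>H. hyperbolic H \<and> submodule H \<and> nondegenerate H \<and> H \<noteq> {0} \<and> H \<subseteq> Z"
proof -
  obtain X where X: "irreducible_submodule X" "X \<subseteq> Z"
    using irreducible_submodule_exists[OF Z(1,3)] .
  obtain X' where X': "irreducible_submodule X'" "X' \<subseteq> Z"
    and right: "\<forall>x'\<in>X'. (\<forall>x\<in>X. b x x' = 0) \<longrightarrow> x' = 0"
    using pairing_partner_exists[OF Z(1,2) X] .
  have sm: "submodule X" "submodule X'" and nonzero: "X \<noteq> {0}" "X' \<noteq> {0}"
    using X(1) X'(1) unfolding irreducible_submodule_def by auto
  have iso: "isotropic X" "isotropic X'"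
    using Z_isotropic X X' by auto
  have pairing: "nondegenerate_pairing X X'"
    using irreducible_pairing_nondegenerate[OF X(1) sm(2) nonzero(2) right] .
  note H = hyperbolic_sum_nondegenerate[OF sm(1) iso(1) sm(2) iso(2) pairing]
  have "X \<subseteq> X + X'"
    using set_zero_plus2[OF submodule_zero[OF sm(2)], of X] by (simp add: add.commute)
  moreover have "X + X' \<subseteq> Z"
    using X(2) X'(2) subspace_add[OF submodule_subspace[OF Z(1)]] by (auto simp: set_plus_def)
  ultimately show ?thesis
    using H X X' iso nonzero(1) submodule_plus[OF sm] submodule_zero[OF sm(1)]
    unfolding hyperbolic_def by blast
qed

lemma nondegenerate_complement_b_radical:
  assumes "b_radical \<inter> Y = {0}" "UNIV \<subseteq> b_radical + Y"
  shows "nondegenerate Y"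
  unfolding nondegenerate_def
proof (intro ballI impI)
  fix y assume y: "y \<in> Y" "\<forall>t\<in>Y. b y t = 0"
  have "b y w = 0" for w
  proof -
    from assms(2) have "w \<in> b_radical + Y" by blast
    then obtain k y' where "k \<in> b_radical" "y' \<in> Y" "w = k + y'" by (rule set_plus_elim)
    then show ?thesis using y(2) by (simp add: b_add_right b_radical_def b_sym[of y k])
  qed
  then show "y = 0" using assms(1) y(1) unfolding b_radical_def by blast
qed

lemma orthogonal_decomposition_list:
  obtains Ls Hs where
    "\<forall>L\<in>set Ls. irreducible_submodule L \<and> nondegenerate L"
    "\<forall>H\<in>set Hs. hyperbolic H \<and> submodule H \<and> nondegenerate H"
    "pairwise_orthogonal (b_radical # Ls @ Hs)"
    "sum_list (b_radical # Ls @ Hs) = UNIV"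
    "\<forall>U. irreducible_submodule U \<and> U \<subseteq> sum_list Hs \<longrightarrow> isotropic U"
proof -
  obtain Y where Y: "submodule Y" "b_radical \<inter> Y = {0}" "UNIV \<subseteq> b_radical + Y"
    using submodule_complement[OF submodule_b_radical submodule_UNIV] by blast
  define isotropic_only where
    "isotropic_only Z \<longleftrightarrow> (\<forall>U. irreducible_submodule U \<and> U \<subseteq> Z \<longrightarrow> isotropic U)" for Z
  have "\<exists>U. irreducible_submodule U \<and> submodule U \<and> nondegenerate U \<and> U \<noteq> {0} \<and> U \<subseteq> Y'"
    if "\<not> isotropic_only Y'" for Y'
    using that irreducible_nondegenerate unfolding isotropic_only_def irreducible_submodule_def by blast
  then obtain Ls Z where Ls: "\<forall>L\<in>set Ls. irreducible_submodule L \<and> submodule L \<and> nondegenerate L"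
    and Z: "submodule Z" "nondegenerate Z" "isotropic_only Z"
    and orth_Ls: "pairwise_orthogonal (Z # Ls)" and Y_eq: "Y = sum_list (Z # Ls)"
    using orthogonal_peeling[OF Y(1) nondegenerate_complement_b_radical[OF Y(2,3)],
        of isotropic_only irreducible_submodule] by blast
  have "\<exists>H. hyperbolic H \<and> submodule H \<and> nondegenerate H \<and> H \<noteq> {0} \<and> H \<subseteq> Z'"
    if "submodule Z'" "nondegenerate Z'" "Z' \<subseteq> Z" "Z' \<noteq> {0}" for Z'
    using hyperbolic_submodule_exists that Z(3) unfolding isotropic_only_def by blast
  then obtain Hs where Hs: "\<forall>H\<in>set Hs. hyperbolic H \<and> submodule H \<and> nondegenerate H"
    and orth_Hs: "pairwise_orthogonal ({0} # Hs)" and Z_eq: "Z = sum_list ({0} # Hs)"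
    using orthogonal_peeling[OF Z(1,2), of "\<lambda>Z'. Z' = {0}" hyperbolic] by blast
  have "H \<subseteq> Z" if "H \<in> set Hs" for H
    using that Hs submodule_zero unfolding Z_eq by (intro member_sum_list_subset) auto
  then have "b_orthogonal L H" if "L \<in> set Ls" "H \<in> set Hs" for L H
    using that orth_Ls b_orthogonal_mono b_orthogonal_sym by (metis sorted_wrt.simps(2) order_refl)
  then have "pairwise_orthogonal (b_radical # Ls @ Hs)"
    using orth_Ls orth_Hs b_orthogonal_radical by (simp add: sorted_wrt_append)
  moreover have "sum_list (b_radical # Ls @ Hs) = UNIV"
    using Y(3) Y_eq Z_eq by (auto simp: add_ac)
  moreover have "\<forall>U. irreducible_submodule U \<and> U \<subseteq> sum_list Hs \<longrightarrow> isotropic U"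
    using Z(3) Z_eq unfolding isotropic_only_def by simp
  moreover have "\<forall>L\<in>set Ls. irreducible_submodule L \<and> nondegenerate L"
    using Ls by blast
  ultimately show ?thesis
    using that Hs by blast
qed

lemma pairwise_orthogonal_nth:
  assumes "pairwise_orthogonal Ws" "i < length Ws" "j < length Ws" "i \<noteq> j"
  shows "b_orthogonal (Ws ! i) (Ws ! j)"
  using assms b_orthogonal_sym unfolding sorted_wrt_iff_nth_less by (metis linorder_neqE_nat)

lemma orthogonal_sum_eq_0:
  assumes orth: "pairwise_orthogonal Ws" and nondeg: "\<forall>i\<in>{1..<length Ws}. nondegenerate (Ws ! i)"
    and f: "\<forall>i<length Ws. f i \<in> Ws ! i" and sum: "(\<Sum>i<length Ws. f i) = 0"
  shows "\<forall>i<length Ws. f i = 0"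
proof -
  have nonzero_index: "f i = 0" if i: "i \<in> {1..<length Ws}" for i
  proof -
    have "b (f i) t = 0" if t: "t \<in> Ws ! i" for t
    proof -
      have "b (f j) t = 0" if "j \<in> {..<length Ws} - {i}" for j
        using pairwise_orthogonal_nth[OF orth, of j i] that f t i unfolding b_orthogonal_def by auto
      then have "(\<Sum>j\<in>{..<length Ws} - {i}. b (f j) t) = 0"
        by (rule sum.neutral[OF ballI])
      moreover have "(\<Sum>j<length Ws. b (f j) t) = b (f i) t + (\<Sum>j\<in>{..<length Ws} - {i}. b (f j) t)"
        using i sum.remove[of "{..<length Ws}" i] by simp
      ultimately show ?thesis
        using sum by (simp add: b_sum_left[symmetric] b_zero_left)
    qed
    then show ?thesis using nondeg f i unfolding nondegenerate_def by auto
  qed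
  moreover have "f 0 = 0" if "0 < length Ws"
  proof -
    have "(\<Sum>i<length Ws. f i) = f 0 + (\<Sum>i\<in>{1..<length Ws}. f i)"
      using sum.atLeastLessThan_concat[of 0 1 "length Ws" f] that by (simp add: lessThan_atLeast0)
    then show ?thesis using sum nonzero_index by simp
  qed
  ultimately show ?thesis by (metis atLeastLessThan_iff less_one not_le)
qed

lemma indexed_direct_sum:
  assumes orth: "pairwise_orthogonal Ws" and nondeg: "\<forall>i\<in>{1..<length Ws}. nondegenerate (Ws ! i)"
    and span: "sum_list Ws = UNIV"
  shows "\<forall>w. \<exists>f. (\<forall>i<length Ws. f i \<in> Ws ! i) \<and> w = (\<Sum>i<length Ws. f i)"
    and "\<forall>f. (\<forall>i<length Ws. f i \<in> Ws ! i) \<and> (\<Sum>i<length Ws. f i) = 0 \<longrightarrow> (\<forall>i<length Ws. f i = 0)"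
    and "\<forall>i<length Ws. \<forall>j<length Ws. i \<noteq> j \<longrightarrow> b_orthogonal (Ws ! i) (Ws ! j)"
proof -
  show "\<forall>w. \<exists>f. (\<forall>i<length Ws. f i \<in> Ws ! i) \<and> w = (\<Sum>i<length Ws. f i)"
  proof
    fix w
    have "w \<in> sum_list Ws" using span by simp
    then show "\<exists>f. (\<forall>i<length Ws. f i \<in> Ws ! i) \<and> w = (\<Sum>i<length Ws. f i)"
      unfolding sum_list_set_eq_indexed_sums by blast
  qed
  show "\<forall>f. (\<forall>i<length Ws. f i \<in> Ws ! i) \<and> (\<Sum>i<length Ws. f i) = 0 \<longrightarrow> (\<forall>i<length Ws. f i = 0)"
    using orthogonal_sum_eq_0[OF orth nondeg] by blast
  show "\<forall>i<length Ws. \<forall>j<length Ws. i \<noteq> j \<longrightarrow> b_orthogonal (Ws ! i) (Ws ! j)"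
    using pairwise_orthogonal_nth[OF orth] by blast
qed

definition orthogonal_decomposition :: "nat \<Rightarrow> nat \<Rightarrow> (nat \<Rightarrow> 'w set) \<Rightarrow> bool" where
  "orthogonal_decomposition l m Ws \<longleftrightarrow>
     (\<forall>i\<le>l+m. submodule (Ws i)) \<and>
     (\<forall>w. \<exists>f. (\<forall>i\<le>l+m. f i \<in> Ws i) \<and> w = (\<Sum>i\<le>l+m. f i)) \<and>
     (\<forall>f. (\<forall>i\<le>l+m. f i \<in> Ws i) \<and> (\<Sum>i\<le>l+m. f i) = 0 \<longrightarrow> (\<forall>i\<le>l+m. f i = 0)) \<and>
     (\<forall>i\<le>l+m. \<forall>j\<le>l+m. i \<noteq> j \<longrightarrow> b_orthogonal (Ws i) (Ws j)) \<and>
     Ws 0 = b_radical \<and>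
     (\<forall>i\<in>{1..l+m}. nondegenerate (Ws i)) \<and>
     (\<forall>i\<in>{1..l}. irreducible_submodule (Ws i)) \<and>
     (\<forall>j\<in>{l+1..l+m}. hyperbolic (Ws j)) \<and>
     (\<forall>U. irreducible_submodule U \<and> U \<subseteq> {\<Sum>j\<in>{l+1..l+m}. f j | f. \<forall>j\<in>{l+1..l+m}. f j \<in> Ws j}
          \<longrightarrow> isotropic U)"

lemma orthogonal_decomposition_exists: "\<exists>l m Ws. orthogonal_decomposition l m Ws"
proof -
  obtain Ls Hs where Ls: "\<forall>L\<in>set Ls. irreducible_submodule L \<and> nondegenerate L"
    and Hs: "\<forall>H\<in>set Hs. hyperbolic H \<and> submodule H \<and> nondegenerate H"
    and orth: "pairwise_orthogonal (b_radical # Ls @ Hs)"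
    and span: "sum_list (b_radical # Ls @ Hs) = UNIV"
    and Hs_isotropic: "\<forall>U. irreducible_submodule U \<and> U \<subseteq> sum_list Hs \<longrightarrow> isotropic U"
    by (rule orthogonal_decomposition_list)
  define l m Ws where "l = length Ls" and "m = length Hs" and "Ws = b_radical # Ls @ Hs"
  have indices: "{..l+m} = {..<length Ws}" "{1..l+m} = {1..<length Ws}" "\<And>i. i \<le> l+m \<longleftrightarrow> i < length Ws"
    unfolding l_def m_def Ws_def by auto
  have nondeg: "\<forall>i\<in>{1..<length Ws}. nondegenerate (Ws ! i)"
    using Ls Hs nth_Cons_append_mem(3)[where xs=Ls and ys=Hs] unfolding Ws_def by fastforce
  note direct_sum = indexed_direct_sum[OF orth[folded Ws_def] nondeg span[folded Ws_def]]
  have "Ws ! j \<subseteq> sum_list Hs" if "j \<in> {l+1..l+m}" for j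
    using that Hs submodule_zero nth_Cons_append_mem(2)[where xs=Ls and ys=Hs] unfolding Ws_def l_def m_def
    by (intro member_sum_list_subset) auto
  then have Hs_sums: "{\<Sum>j\<in>{l+1..l+m}. f j | f. \<forall>j\<in>{l+1..l+m}. f j \<in> Ws ! j} \<subseteq> sum_list Hs"
    using Hs submodule_subspace by (intro indexed_sums_subset_subspace subspace_sum_list) auto
  have "orthogonal_decomposition l m ((!) Ws)"
    unfolding orthogonal_decomposition_def indices
  proof (intro conjI)
    show "\<forall>i<length Ws. submodule (Ws ! i)"
      using Ls Hs submodule_b_radical unfolding Ws_def irreducible_submodule_def
      by (auto simp: nth_Cons' nth_append)
    show "\<forall>w. \<exists>f. (\<forall>i<length Ws. f i \<in> Ws ! i) \<and> w = (\<Sum>i<length Ws. f i)"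
      "\<forall>f. (\<forall>i<length Ws. f i \<in> Ws ! i) \<and> (\<Sum>i<length Ws. f i) = 0 \<longrightarrow> (\<forall>i<length Ws. f i = 0)"
      "\<forall>i<length Ws. \<forall>j<length Ws. i \<noteq> j \<longrightarrow> b_orthogonal (Ws ! i) (Ws ! j)"
      by (fact direct_sum)+
    show "Ws ! 0 = b_radical"
      unfolding Ws_def by simp
    show "\<forall>i\<in>{1..<length Ws}. nondegenerate (Ws ! i)"
      by (rule nondeg)
    show "\<forall>i\<in>{1..l}. irreducible_submodule (Ws ! i)" "\<forall>j\<in>{l+1..l+m}. hyperbolic (Ws ! j)"
      using Ls Hs nth_Cons_append_mem(1,2)[where xs=Ls and ys=Hs] unfolding Ws_def l_def m_def by blast+
    show "\<forall>U. irreducible_submodule U \<and> U \<subseteq> {\<Sum>j\<in>{l+1..l+m}. f j | f. \<forall>j\<in>{l+1..l+m}. f j \<in> Ws ! j}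
        \<longrightarrow> isotropic U"
      using Hs_isotropic Hs_sums by blast
  qed
  then show ?thesis by blast
qed

end

section \<open>The form \<open>b\<close> of an equivariant map\<close>

locale equivariant_wedge_map =
  fixes p q p' :: nat and act :: "(nat set \<Rightarrow> real) \<Rightarrow> 'w::euclidean_space \<Rightarrow> 'w"
    and Pmap :: "'w \<Rightarrow> 'w \<Rightarrow> nat \<Rightarrow> real"
  assumes p'_le_p: "p' \<le> p" and p'_mod_4: "p' mod 4 = 3" and module: "cl0_module p q act"
    and wedge: "wedge2_map (p+q) Pmap" and equivariant: "oV_equivariant p q act Pmap"
begin

abbreviation n :: nat where "n \<equiv> p + q"

abbreviation bf :: "'w \<Rightarrow> 'w \<Rightarrow> real" where "bf \<equiv> bform p q p' act Pmap"

definition blade_act :: "nat set \<Rightarrow> 'w \<Rightarrow> 'w" where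
  "blade_act S = act (cl_blade S)"

definition even_blades :: "nat set set" where
  "even_blades = {S. S \<subseteq> {..<n} \<and> even (card S)}"

lemma p_ge_3: "3 \<le> p"
  using p'_le_p p'_mod_4 by presburger

lemma linear_act: "x \<in> Cl0 n \<Longrightarrow> linear (act x)"
  using module unfolding cl0_module_def by blast

lemma act_add: "x \<in> Cl0 n \<Longrightarrow> y \<in> Cl0 n \<Longrightarrow> act (\<lambda>S. x S + y S) u = act x u + act y u"
  using module unfolding cl0_module_def by blast

lemma act_scale: "x \<in> Cl0 n \<Longrightarrow> act (\<lambda>S. c * x S) u = c *\<^sub>R act x u"
  using module unfolding cl0_module_def by blast

lemma act_one: "act cl_one u = u"
  using module unfolding cl0_module_def by blast

lemma act_mult: "x \<in> Cl0 n \<Longrightarrow> y \<in> Cl0 n \<Longrightarrow> act (cl_mult p q x y) u = act x (act y u)"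
  using module unfolding cl0_module_def by blast

lemma finite_even_blades: "finite even_blades"
  unfolding even_blades_def by (rule finite_subset[of _ "Pow {..<n}"]) auto

lemma even_blade_in_Cl0: "S \<in> even_blades \<Longrightarrow> cl_blade S \<in> Cl0 n"
  unfolding even_blades_def by (auto intro: cl_blade_in_Cl0)

lemma pair_in_even_blades: "i < j \<Longrightarrow> j < n \<Longrightarrow> {i, j} \<in> even_blades"
  unfolding even_blades_def by auto

lemma sym_diff_in_even_blades: "S \<in> even_blades \<Longrightarrow> T \<in> even_blades \<Longrightarrow> sym_diff S T \<in> even_blades"
  unfolding even_blades_def using even_card_symdiff[of S T] finite_subset[of _ "{..<n}"] by auto

lemma linear_blade_act: "S \<in> even_blades \<Longrightarrow> linear (blade_act S)"
  unfolding blade_act_def using linear_act even_blade_in_Cl0 by blast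

lemma blade_act_empty: "blade_act {} u = u"
  unfolding blade_act_def cl_one_eq_blade_empty[symmetric] by (rule act_one)

lemma blade_act_mult:
  assumes S: "S \<in> even_blades" and T: "T \<in> even_blades"
  shows "blade_act S (blade_act T u) = blade_coeff p S T *\<^sub>R blade_act (sym_diff S T) u"
proof -
  have "blade_act S (blade_act T u) = act (cl_mult p q (cl_blade S) (cl_blade T)) u"
    unfolding blade_act_def using act_mult[OF even_blade_in_Cl0[OF S] even_blade_in_Cl0[OF T]] by simp
  also have "\<dots> = act (\<lambda>U. blade_coeff p S T * cl_blade (sym_diff S T) U) u"
    using S T unfolding even_blades_def by (subst cl_mult_blade) auto
  also have "\<dots> = blade_coeff p S T *\<^sub>R blade_act (sym_diff S T) u"
    unfolding blade_act_def by (rule act_scale[OF even_blade_in_Cl0[OF sym_diff_in_even_blades[OF S T]]])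
  finally show ?thesis .
qed

lemma blade_act_commute:
  assumes S: "S \<in> even_blades" and T: "T \<in> even_blades"
  shows "blade_act S (blade_act T u) = (blade_coeff p S T * blade_coeff p T S) *\<^sub>R blade_act T (blade_act S u)"
proof -
  have "blade_act T (blade_act S u) = blade_coeff p T S *\<^sub>R blade_act (sym_diff S T) u"
    using blade_act_mult[OF T S] by (simp add: Un_commute)
  then have "blade_act (sym_diff S T) u = blade_coeff p T S *\<^sub>R blade_act T (blade_act S u)"
    using blade_coeff_square[of p T S] by simp
  then show ?thesis using blade_act_mult[OF S T] by simp
qed

lemma blade_act_square: "S \<in> even_blades \<Longrightarrow> blade_act S (blade_act S u) = blade_coeff p S S *\<^sub>R u"
  using blade_act_mult[of S S u] blade_act_empty by simp

lemma blade_combination_in_Cl0: "F \<subseteq> even_blades \<Longrightarrow> (\<lambda>U. \<Sum>S\<in>F. c S * cl_blade S U) \<in> Cl0 n"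
  unfolding Cl0_def Cl_def even_blades_def cl_blade_def by (auto intro!: sum.neutral)

lemma Cl0_blade_expansion: "x \<in> Cl0 n \<Longrightarrow> x = (\<lambda>U. \<Sum>S\<in>even_blades. x S * cl_blade S U)"
proof
  fix U assume x: "x \<in> Cl0 n"
  have "(\<Sum>S\<in>even_blades. x S * cl_blade S U) = (\<Sum>S\<in>even_blades. if S = U then x U else 0)"
    by (intro sum.cong) (auto simp: cl_blade_def)
  also have "\<dots> = x U"
    using x finite_even_blades unfolding even_blades_def Cl0_def Cl_def by (auto simp: sum.delta')
  finally show "x U = (\<Sum>S\<in>even_blades. x S * cl_blade S U)" by simp
qed

lemma act_blade_combination:
  "F \<subseteq> even_blades \<Longrightarrow> act (\<lambda>U. \<Sum>S\<in>F. c S * cl_blade S U) u = (\<Sum>S\<in>F. c S *\<^sub>R blade_act S u)"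
proof (induction F rule: infinite_finite_induct)
  case (infinite F)
  then show ?case using finite_even_blades finite_subset by blast
next
  case empty
  have "act (\<lambda>U. 0 * cl_one U) u = 0"
    using act_scale[of cl_one 0 u] cl_blade_in_Cl0[of "{}" n] cl_one_eq_blade_empty by simp
  then show ?case by simp
next
  case (insert S F)
  then have S: "S \<in> even_blades" and F: "F \<subseteq> even_blades" by auto
  have "act (\<lambda>U. \<Sum>S\<in>insert S F. c S * cl_blade S U) u =
        act (\<lambda>U. c S * cl_blade S U + (\<Sum>S\<in>F. c S * cl_blade S U)) u"
    using insert.hyps by simp
  also have "\<dots> = act (\<lambda>U. c S * cl_blade S U) u + act (\<lambda>U. \<Sum>S\<in>F. c S * cl_blade S U) u"
    using act_add blade_combination_in_Cl0[OF F] blade_combination_in_Cl0[of "{S}" c] S by simp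
  also have "\<dots> = c S *\<^sub>R blade_act S u + (\<Sum>S\<in>F. c S *\<^sub>R blade_act S u)"
    using insert.IH[OF F] act_scale[OF even_blade_in_Cl0[OF S]] unfolding blade_act_def by simp
  finally show ?case using insert.hyps by simp
qed

lemma act_blade_expansion: "x \<in> Cl0 n \<Longrightarrow> act x u = (\<Sum>S\<in>even_blades. x S *\<^sub>R blade_act S u)"
  using act_blade_combination[of even_blades x u] Cl0_blade_expansion[of x] by simp

lemma even_blade_split_pair:
  assumes "S \<in> even_blades" "S \<noteq> {}"
  obtains i j where "i < j" "j < n" "S - {i, j} \<in> even_blades" "card (S - {i, j}) < card S"
    "sym_diff {i, j} (S - {i, j}) = S"
proof -
  have S: "finite S" "S \<subseteq> {..<n}" "even (card S)"
    using assms(1) finite_subset unfolding even_blades_def by auto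
  then have "2 \<le> card S"
    using assms(2) card_0_eq[of S] by presburger
  then obtain i j where ij: "i < j" "{i, j} \<subseteq> S"
    by (elim obtain_subset_with_card_n) (auto simp: card_2_iff linorder_neq_iff)
  have "card (S - {i, j}) = card S - 2"
    using ij S(1) by (simp add: card_Diff_subset)
  then have "S - {i, j} \<in> even_blades" "card (S - {i, j}) < card S"
    using S \<open>2 \<le> card S\<close> unfolding even_blades_def by auto
  moreover have "sym_diff {i, j} (S - {i, j}) = S" using ij by auto
  ultimately show ?thesis using that ij S(2) by auto
qed

lemma cl0_submoduleI_pair_blades:
  assumes U: "subspace U" and pairs: "\<And>i j u. i < j \<Longrightarrow> j < n \<Longrightarrow> u \<in> U \<Longrightarrow> blade_act {i, j} u \<in> U"
  shows "cl0_submodule p q act U"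
proof -
  have "blade_act S u \<in> U" if "S \<in> even_blades" "u \<in> U" for S u
    using that
  proof (induction "card S" arbitrary: S rule: less_induct)
    case less
    show ?case
    proof (cases "S = {}")
      case True
      then show ?thesis using blade_act_empty less.prems by simp
    next
      case False
      then obtain i j where ij: "i < j" "j < n" "S - {i, j} \<in> even_blades" "card (S - {i, j}) < card S"
        "sym_diff {i, j} (S - {i, j}) = S"
        using even_blade_split_pair[OF less.prems(1)] by blast
      have "blade_act S u = blade_coeff p {i, j} (S - {i, j}) *\<^sub>R blade_act {i, j} (blade_act (S - {i, j}) u)"
        using blade_act_mult[OF pair_in_even_blades[OF ij(1,2)] ij(3)] ij(5)
          blade_coeff_square[of p "{i, j}" "S - {i, j}"] by simp
      moreover have "blade_act (S - {i, j}) u \<in> U"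
        using less.hyps[OF ij(4) ij(3)] less.prems(2) by blast
      ultimately show ?thesis using pairs[OF ij(1,2)] U subspace_scale by metis
    qed
  qed
  then show ?thesis
    unfolding cl0_submodule_def using U act_blade_expansion by (auto intro!: subspace_sum subspace_scale)
qed

lemma Pmap_outside: "n \<le> k \<Longrightarrow> Pmap s t k = 0"
  using wedge unfolding wedge2_map_def Vset_def by blast

lemma Pmap_add_left: "Pmap (s + s') t k = Pmap s t k + Pmap s' t k"
  using wedge unfolding wedge2_map_def by (simp add: fun_eq_iff)

lemma Pmap_scale_left: "Pmap (c *\<^sub>R s) t k = c * Pmap s t k"
  using wedge unfolding wedge2_map_def by (simp add: fun_eq_iff)

lemma Pmap_add_right: "Pmap s (t + t') k = Pmap s t k + Pmap s t' k"
  using wedge unfolding wedge2_map_def by (simp add: fun_eq_iff)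

lemma Pmap_scale_right: "Pmap s (c *\<^sub>R t) k = c * Pmap s t k"
  using wedge unfolding wedge2_map_def by (simp add: fun_eq_iff)

lemma Pmap_self: "Pmap s s k = 0"
  using wedge unfolding wedge2_map_def by (simp add: fun_eq_iff)

lemma Pmap_antisym: "Pmap s t k = - Pmap t s k"
proof -
  have "0 = Pmap (s + t) (s + t) k" using Pmap_self by simp
  also have "\<dots> = Pmap s s k + Pmap t s k + (Pmap s t k + Pmap t t k)"
    by (simp only: Pmap_add_left Pmap_add_right)
  finally show ?thesis by (simp add: Pmap_self)
qed

text \<open>Indices are 0-based: \<open>\<beta> s t\<close> is \<open>\<langle>e\<^sub>1, \<Pi>(s \<and> t)\<rangle>\<close> (as \<open>sgnpq p 0 = 1\<close>), \<open>E\<close> acts as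
  \<open>e\<^sub>2 \<cdots> e\<^sub>p\<^sub>'\<close> and \<open>B j\<close> as \<open>e\<^sub>1 e\<^sub>j\<^sub>+\<^sub>1\<close>.\<close>

definition \<beta> :: "'w \<Rightarrow> 'w \<Rightarrow> real" where
  "\<beta> s t = Pmap s t 0"

definition E :: "'w \<Rightarrow> 'w" where
  "E = blade_act {1..<p'}"

definition B :: "nat \<Rightarrow> 'w \<Rightarrow> 'w" where
  "B j = blade_act {0, j}"

lemma bform_eq: "bf s t = \<beta> (E s) t"
  unfolding bform_def \<beta>_def E_def blade_act_def using ip_stdbasis[of 0 p q] p_ge_3 sgnpq_0[of p] by simp

lemma beta_scale_left: "\<beta> (c *\<^sub>R s) t = c * \<beta> s t"
  unfolding \<beta>_def by (rule Pmap_scale_left)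

lemma beta_scale_right: "\<beta> s (c *\<^sub>R t) = c * \<beta> s t"
  unfolding \<beta>_def by (rule Pmap_scale_right)

lemma beta_minus_left: "\<beta> (- s) t = - \<beta> s t"
  using beta_scale_left[of "-1" s t] by simp

lemma beta_minus_right: "\<beta> s (- t) = - \<beta> s t"
  using beta_scale_right[of s "-1" t] by simp

lemma spin_stdbasis:
  assumes "i < j" "j < n"
  shows "spin p q (stdbasis i) (stdbasis j) = (\<lambda>S. (-1/2) * cl_blade {i, j} S)"
proof -
  have "sym_diff {i} {j} = {i, j}" "sym_diff {j} {i} = {i, j}" using assms by auto
  then show ?thesis
    unfolding spin_def cl_vec_stdbasis[OF less_trans[OF assms]] cl_vec_stdbasis[OF assms(2)]
    using cl_mult_blade[of "{i}" p q "{j}"] cl_mult_blade[of "{j}" p q "{i}"] assms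
      blade_coeff_singletons[OF assms(1), of p]
    by (auto simp: fun_eq_iff)
qed

lemma act_spin_stdbasis:
  "i < j \<Longrightarrow> j < n \<Longrightarrow> act (spin p q (stdbasis i) (stdbasis j)) u = (-1/2) *\<^sub>R blade_act {i, j} u"
  unfolding spin_stdbasis blade_act_def by (rule act_scale[OF even_blade_in_Cl0[OF pair_in_even_blades]])

lemma stdbasis_in_Vset: "i < n \<Longrightarrow> stdbasis i \<in> Vset n"
  unfolding Vset_def stdbasis_def by auto

lemma oV_act_stdbasis:
  "i < n \<Longrightarrow> j < n \<Longrightarrow> oV_act p q (stdbasis i) (stdbasis j) z k =
     (if k = i then sgnpq p j * z j else 0) - (if k = j then sgnpq p i * z i else 0)"
  unfolding oV_act_def by (simp add: ip_stdbasis) (simp add: stdbasis_def)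

lemma equivariant_component:
  assumes "x \<in> Vset n" "y \<in> Vset n"
  shows "Pmap (act (spin p q x y) s) t k + Pmap s (act (spin p q x y) t) k = oV_act p q x y (Pmap s t) k"
  using fun_cong[OF equivariant[unfolded oV_equivariant_def, rule_format, OF assms], of s t k] by simp

lemma equivariant_stdbasis:
  assumes "i < j" "j < n"
  shows "(-1/2) * (Pmap (blade_act {i, j} s) t k + Pmap s (blade_act {i, j} t) k) =
    (if k = i then sgnpq p j * Pmap s t j else 0) - (if k = j then sgnpq p i * Pmap s t i else 0)"
  using equivariant_component[OF stdbasis_in_Vset stdbasis_in_Vset, of i j s t k] assms
  unfolding act_spin_stdbasis[OF assms] Pmap_scale_left Pmap_scale_right
    oV_act_stdbasis[OF less_trans[OF assms] assms(2)]
  by (simp add: distrib_left)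

lemma beta_pair_skew: "0 < i \<Longrightarrow> i < j \<Longrightarrow> j < n \<Longrightarrow> \<beta> (blade_act {i, j} s) t = - \<beta> s (blade_act {i, j} t)"
  using equivariant_stdbasis[of i j s t 0] unfolding \<beta>_def by simp

lemma beta_B_sum: "0 < j \<Longrightarrow> j < n \<Longrightarrow> (-1/2) * (\<beta> (B j s) t + \<beta> s (B j t)) = sgnpq p j * Pmap s t j"
  using equivariant_stdbasis[of 0 j s t 0] unfolding \<beta>_def B_def by simp

lemma Pmap_B_sum: "0 < j \<Longrightarrow> j < n \<Longrightarrow> (-1/2) * (Pmap (B j s) t j + Pmap s (B j t) j) = - \<beta> s t"
  using equivariant_stdbasis[of 0 j s t j] p_ge_3 unfolding \<beta>_def B_def by (simp add: sgnpq_0)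

lemma B_square: "0 < j \<Longrightarrow> j < n \<Longrightarrow> B j (B j u) = (- sgnpq p j) *\<^sub>R u"
  unfolding B_def using blade_act_square[OF pair_in_even_blades[of 0 j]] blade_coeff_pair_0_square[of j p] p_ge_3
  by simp

lemma beta_B_B:
  assumes j: "0 < j" "j < n"
  shows "\<beta> (B j s) (B j t) = - sgnpq p j * \<beta> s t"
proof -
  let ?g = "sgnpq p j"
  have "?g * Pmap (B j s) t j = (-1/2) * (- ?g * \<beta> s t + \<beta> (B j s) (B j t))"
    using beta_B_sum[OF j, of "B j s" t] B_square[OF j] by (simp add: beta_scale_left beta_minus_left)
  moreover have "?g * Pmap s (B j t) j = (-1/2) * (\<beta> (B j s) (B j t) - ?g * \<beta> s t)"
    using beta_B_sum[OF j, of s "B j t"] B_square[OF j] by (simp add: beta_scale_right beta_minus_right)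
  moreover have "(-1/2) * (?g * Pmap (B j s) t j + ?g * Pmap s (B j t) j) = - ?g * \<beta> s t"
    using Pmap_B_sum[OF j, of s t] by (simp add: algebra_simps)
  ultimately have "(-1/2) * ((-1/2) * (- ?g * \<beta> s t + \<beta> (B j s) (B j t))
      + (-1/2) * (\<beta> (B j s) (B j t) - ?g * \<beta> s t)) = - ?g * \<beta> s t"
    by simp
  then show ?thesis by (simp add: algebra_simps)
qed

lemma beta_B_symmetric:
  assumes j: "0 < j" "j < n"
  shows "\<beta> (B j s) t = \<beta> s (B j t)"
proof -
  have "- sgnpq p j * \<beta> (B j s) t = - sgnpq p j * \<beta> s (B j t)"
    using beta_B_B[OF j, of s "B j t"] B_square[OF j] by (simp add: beta_scale_right beta_minus_right)
  then show ?thesis using sgnpq_nonzero[of p j] by simp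
qed

lemma Pmap_component_eq:
  assumes j: "0 < j" "j < n"
  shows "Pmap s t j = - sgnpq p j * \<beta> (B j s) t"
proof -
  have "sgnpq p j * Pmap s t j = - \<beta> (B j s) t"
    using beta_B_sum[OF j, of s t] beta_B_symmetric[OF j, of s t] by simp
  then have "sgnpq p j * (sgnpq p j * Pmap s t j) = - sgnpq p j * \<beta> (B j s) t" by simp
  then show ?thesis using sgnpq_square[of p j] by (simp add: mult.assoc[symmetric])
qed

lemma beta_interval_blade_adjoint:
  "2 * r < n \<Longrightarrow> \<beta> (blade_act {1..<2*r+1} s) t = (-1)^r * \<beta> s (blade_act {1..<2*r+1} t)"
proof (induction r arbitrary: s t)
  case 0
  then show ?case using blade_act_empty by simp
next
  case (Suc r)
  define S P where "S = {1..<2*r+1}" and "P = {2*r+1, 2*r+2}"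
  have SP: "S \<in> even_blades" "P \<in> even_blades"
    unfolding S_def P_def even_blades_def using Suc.prems by auto
  have "sym_diff S P = {1..<2*Suc r+1}" "sym_diff P S = {1..<2*Suc r+1}"
    unfolding S_def P_def using sym_diff_interval_pair[of r] by auto
  then have SP_mult: "blade_act {1..<2*Suc r+1} u = blade_act S (blade_act P u)"
    and PS_mult: "blade_act {1..<2*Suc r+1} u = blade_act P (blade_act S u)" for u
    using blade_act_mult[OF SP, of u] blade_act_mult[OF SP(2,1), of u]
      blade_coeff_interval_pair[of p r] blade_coeff_pair_interval[of p r] unfolding S_def P_def by simp_all
  have IH: "\<beta> (blade_act S x) y = (-1)^r * \<beta> x (blade_act S y)" for x y
    unfolding S_def using Suc.IH[of x y] Suc.prems by simp
  have P_skew: "\<beta> (blade_act P x) y = - \<beta> x (blade_act P y)" for x y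
    unfolding P_def using beta_pair_skew[of "2*r+1" "2*r+2" x y] Suc.prems by simp
  have "\<beta> (blade_act {1..<2*Suc r+1} s) t = (-1)^r * \<beta> (blade_act P s) (blade_act S t)"
    unfolding SP_mult by (rule IH)
  also have "\<dots> = (-1)^(Suc r) * \<beta> s (blade_act {1..<2*Suc r+1} t)"
    unfolding PS_mult P_skew by simp
  finally show ?case .
qed

lemma interval_in_even_blades: "{1..<p'} \<in> even_blades"
  using p'_le_p p'_mod_4 unfolding even_blades_def by auto presburger

lemma linear_E: "linear E"
  unfolding E_def using linear_blade_act[OF interval_in_even_blades] .

text \<open>\<open>E\<close> is a product of \<open>r = (p' - 1) div 2\<close> \<open>\<beta>\<close>-skew pair blades, and \<open>r\<close> is odd exactly
  because \<open>p' mod 4 = 3\<close>.\<close>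

lemma beta_E_skew: "\<beta> (E s) t = - \<beta> s (E t)"
proof -
  define r where "r = p' div 2"
  have p': "p' = 2 * r + 1" and "odd r"
    unfolding r_def using p'_mod_4 by presburger+
  then have "(-1::real)^r = -1" by simp
  moreover have "2 * r < n" using p' p'_le_p by simp
  moreover have "E = blade_act {1..<2*r+1}" unfolding E_def using p' by simp
  ultimately show ?thesis using beta_interval_blade_adjoint[of r s t] by simp
qed

lemma bform_sym: "bf s t = bf t s"
  unfolding bform_eq using beta_E_skew[of s t] Pmap_antisym[of s "E t" 0] unfolding \<beta>_def by simp

lemma linear_bform_left: "linear (\<lambda>s. bf s t)"
  unfolding bform_eq \<beta>_def
  by (rule linearI) (simp_all add: linear_add[OF linear_E] linear_scale[OF linear_E] Pmap_add_left Pmap_scale_left)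

lemma beta_pair_adjoint:
  assumes "i < j" "j < n"
  obtains \<delta> where "\<And>x y. \<beta> x (blade_act {i, j} y) = \<delta> * \<beta> (blade_act {i, j} x) y"
proof (cases "i = 0")
  case True
  then show ?thesis using that[of 1] beta_B_symmetric[of j] assms unfolding B_def by simp
next
  case False
  then show ?thesis using that[of "-1"] beta_pair_skew[of i j] assms by simp
qed

lemma cl0_submodule_blade_act: "cl0_submodule p q act U \<Longrightarrow> S \<in> even_blades \<Longrightarrow> u \<in> U \<Longrightarrow> blade_act S u \<in> U"
  unfolding cl0_submodule_def blade_act_def using even_blade_in_Cl0 by blast

lemma cl0_submodule_bform_perp:
  assumes U: "cl0_submodule p q act U"
  shows "cl0_submodule p q act {t. \<forall>s\<in>U. bf s t = 0}"
proof (rule cl0_submoduleI_pair_blades)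
  have "linear (\<lambda>t. bf s t)" for s
    using linear_bform_left[of s] by (simp add: bform_sym)
  then show "subspace {t. \<forall>s\<in>U. bf s t = 0}"
    unfolding subspace_def by (simp add: linear_add linear_scale linear_0)
next
  fix i j t assume ij: "i < j" "j < n" and t: "t \<in> {t. \<forall>s\<in>U. bf s t = 0}"
  obtain \<delta> where \<delta>: "\<And>x y. \<beta> x (blade_act {i, j} y) = \<delta> * \<beta> (blade_act {i, j} x) y"
    using beta_pair_adjoint[OF ij] by blast
  let ?c = "blade_coeff p {i, j} {1..<p'} * blade_coeff p {1..<p'} {i, j}"
  have "bf s (blade_act {i, j} t) = 0" if s: "s \<in> U" for s
  proof -
    have "bf s (blade_act {i, j} t) = \<delta> * \<beta> (blade_act {i, j} (E s)) t"
      unfolding bform_eq by (rule \<delta>)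
    also have "blade_act {i, j} (E s) = ?c *\<^sub>R E (blade_act {i, j} s)"
      unfolding E_def by (rule blade_act_commute[OF pair_in_even_blades[OF ij] interval_in_even_blades])
    also have "\<delta> * \<beta> (?c *\<^sub>R E (blade_act {i, j} s)) t = \<delta> * ?c * bf (blade_act {i, j} s) t"
      unfolding bform_eq beta_scale_left by simp
    also have "bf (blade_act {i, j} s) t = 0"
      using t cl0_submodule_blade_act[OF U pair_in_even_blades[OF ij] s] by blast
    finally show ?thesis by simp
  qed
  then show "blade_act {i, j} t \<in> {t. \<forall>s\<in>U. bf s t = 0}" by blast
qed

lemma Pmap_vanishes_if_bform_perp:
  assumes U: "cl0_submodule p q act U" and s: "s \<in> U" and t: "\<forall>s'\<in>U. bf s' t = 0"
  shows "Pmap s t = (\<lambda>k. 0)"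
proof -
  have beta_0: "\<beta> u t = 0" if u: "u \<in> U" for u
  proof -
    let ?c = "blade_coeff p {1..<p'} {1..<p'}"
    have "u = ?c *\<^sub>R E (E u)"
      unfolding E_def using blade_act_square[OF interval_in_even_blades, of u] blade_coeff_square[of p "{1..<p'}"]
      by simp
    then have "\<beta> u t = ?c * bf (E u) t" by (metis beta_scale_left bform_eq)
    moreover have "E u \<in> U" unfolding E_def using cl0_submodule_blade_act[OF U interval_in_even_blades u] .
    ultimately show ?thesis using t by simp
  qed
  show ?thesis
  proof (rule ext)
    fix k
    consider "k = 0" | "0 < k" "k < n" | "n \<le> k" by linarith
    then show "Pmap s t k = 0"
    proof cases
      case 1
      then show ?thesis using beta_0[OF s] unfolding \<beta>_def by simp
    next
      case 2
      then have "B k s \<in> U" unfolding B_def using cl0_submodule_blade_act[OF U pair_in_even_blades s] by simp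
      then show ?thesis using Pmap_component_eq[OF 2, of s t] beta_0 by simp
    next
      case 3
      then show ?thesis by (rule Pmap_outside)
    qed
  qed
qed

text \<open>Averaging the inner product over the blades, which form a finite group up to sign, gives
  an invariant inner product; its orthogonal complements provide complements of submodules.\<close>

definition avg_inner :: "'w \<Rightarrow> 'w \<Rightarrow> real" where
  "avg_inner u v = (\<Sum>S\<in>even_blades. inner (blade_act S u) (blade_act S v))"

lemma linear_avg_inner_left: "linear (\<lambda>u. avg_inner u v)"
  unfolding avg_inner_def
  by (rule linearI) (simp_all add: linear_add[OF linear_blade_act] linear_scale[OF linear_blade_act]
      inner_add_left sum.distrib sum_distrib_left)

lemma avg_inner_sym: "avg_inner u v = avg_inner v u"
  unfolding avg_inner_def by (simp add: inner_commute)

lemma linear_avg_inner_right: "linear (\<lambda>v. avg_inner u v)"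
  using linear_avg_inner_left[of u] by (simp add: avg_inner_sym)

lemma avg_inner_self_eq_0: "avg_inner u u = 0 \<Longrightarrow> u = 0"
proof -
  assume "avg_inner u u = 0"
  moreover have "{} \<in> even_blades" unfolding even_blades_def by simp
  then have "inner u u \<le> avg_inner u u"
    unfolding avg_inner_def using finite_even_blades blade_act_empty
    by (metis (no_types, lifting) inner_ge_zero member_le_sum)
  ultimately show "u = 0" using inner_ge_zero[of u] by simp
qed

lemma avg_inner_blade_act:
  assumes T: "T \<in> even_blades"
  shows "avg_inner (blade_act T u) (blade_act T v) = avg_inner u v"
proof -
  have "avg_inner (blade_act T u) (blade_act T v) =
      (\<Sum>S\<in>even_blades. inner (blade_act (sym_diff S T) u) (blade_act (sym_diff S T) v))"
    unfolding avg_inner_def using blade_act_mult[OF _ T] blade_coeff_square[of p _ T]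
    by (intro sum.cong) simp_all
  also have "\<dots> = avg_inner u v"
    unfolding avg_inner_def
    by (rule sum.reindex_bij_witness[of even_blades "\<lambda>S. sym_diff S T" "\<lambda>S. sym_diff S T"])
      (auto simp: sym_diff_in_even_blades[OF _ T])
  finally show ?thesis .
qed

lemma cl0_submodule_avg_inner_perp:
  assumes U: "cl0_submodule p q act U"
  shows "cl0_submodule p q act {v. \<forall>u\<in>U. avg_inner u v = 0}"
proof (rule cl0_submoduleI_pair_blades)
  show "subspace {v. \<forall>u\<in>U. avg_inner u v = 0}"
    unfolding subspace_def
    by (simp add: linear_add[OF linear_avg_inner_right] linear_scale[OF linear_avg_inner_right]
        linear_0[OF linear_avg_inner_right])
next
  fix i j v assume ij: "i < j" "j < n" and v: "v \<in> {v. \<forall>u\<in>U. avg_inner u v = 0}"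
  note ij_blade = pair_in_even_blades[OF ij]
  let ?c = "blade_coeff p {i, j} {i, j}"
  have "avg_inner u (blade_act {i, j} v) = 0" if u: "u \<in> U" for u
  proof -
    have "u = ?c *\<^sub>R blade_act {i, j} (blade_act {i, j} u)"
      using blade_act_square[OF ij_blade, of u] blade_coeff_square[of p "{i, j}" "{i, j}"] by simp
    then have "avg_inner u (blade_act {i, j} v) =
        ?c * avg_inner (blade_act {i, j} (blade_act {i, j} u)) (blade_act {i, j} v)"
      by (metis linear_scale[OF linear_avg_inner_left] real_scaleR_def)
    also have "\<dots> = ?c * avg_inner (blade_act {i, j} u) v"
      using avg_inner_blade_act[OF ij_blade] by simp
    also have "avg_inner (blade_act {i, j} u) v = 0"
      using v cl0_submodule_blade_act[OF U ij_blade u] by blast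
    finally show ?thesis by simp
  qed
  then show "blade_act {i, j} v \<in> {v. \<forall>u\<in>U. avg_inner u v = 0}" by blast
qed

lemma cl0_submodule_complement:
  assumes U: "cl0_submodule p q act U" and Y: "cl0_submodule p q act Y" and UY: "U \<subseteq> Y"
  shows "\<exists>C. cl0_submodule p q act C \<and> C \<subseteq> Y \<and> U \<inter> C = {0} \<and> Y \<subseteq> U + C"
proof -
  define C where "C = Y \<inter> {v. \<forall>u\<in>U. avg_inner u v = 0}"
  have U_subspace: "subspace U" and Y_subspace: "subspace Y"
    using U Y unfolding cl0_submodule_def by auto
  have "cl0_submodule p q act C"
    using cl0_submodule_avg_inner_perp[OF U] Y unfolding C_def cl0_submodule_def
    by (auto intro: subspace_inter)
  moreover have "U \<inter> C = {0}"
    using avg_inner_self_eq_0 subspace_0[OF U_subspace] subspace_0[OF Y_subspace]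
    unfolding C_def by (auto simp: linear_0[OF linear_avg_inner_right])
  moreover have "y \<in> U + C" if y: "y \<in> Y" for y
  proof -
    obtain u where u: "u \<in> U" "\<forall>t\<in>U. avg_inner y t = avg_inner u t"
      using nondegenerate_form_represents[of avg_inner U y] linear_avg_inner_left linear_avg_inner_right
        U_subspace avg_inner_self_eq_0 by blast
    have "y - u \<in> C" unfolding C_def
      using y u UY subspace_diff[OF Y_subspace]
      by (auto simp: avg_inner_sym[of _ "y - u"] linear_diff[OF linear_avg_inner_left])
    then show ?thesis using u(1) set_plus_intro[of u U "y - u" C] by simp
  qed
  ultimately show ?thesis unfolding C_def by blast
qed

lemma cl0_submodule_plus:
  assumes U: "cl0_submodule p q act U" and V: "cl0_submodule p q act V"
  shows "cl0_submodule p q act (U + V)"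
  unfolding cl0_submodule_def
proof (intro conjI ballI)
  show "subspace (U + V)"
    using U V unfolding cl0_submodule_def by (intro subspace_set_plus) auto
  fix x w assume x: "x \<in> Cl0 n" and "w \<in> U + V"
  then obtain u v where uv: "u \<in> U" "v \<in> V" "w = u + v" by (auto elim: set_plus_elim)
  then have "act x w = act x u + act x v" using linear_add[OF linear_act[OF x]] by simp
  moreover have "act x u \<in> U" "act x v \<in> V" using U V x uv unfolding cl0_submodule_def by auto
  ultimately show "act x w \<in> U + V" by (simp add: set_plus_intro)
qed

sublocale form: invariant_form "cl0_submodule p q act" bf
proof (rule invariant_form.intro)
  show "\<And>U. cl0_submodule p q act U \<Longrightarrow> subspace U"
    unfolding cl0_submodule_def by blast
  show "\<And>U V. cl0_submodule p q act U \<Longrightarrow> cl0_submodule p q act V \<Longrightarrow> cl0_submodule p q act (U \<inter> V)"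
    unfolding cl0_submodule_def by (auto intro: subspace_inter)
  show "cl0_submodule p q act UNIV"
    unfolding cl0_submodule_def by simp
  show "\<And>U V. cl0_submodule p q act U \<Longrightarrow> cl0_submodule p q act V \<Longrightarrow> cl0_submodule p q act (U + V)"
    by (rule cl0_submodule_plus)
  show "\<And>U. cl0_submodule p q act U \<Longrightarrow> cl0_submodule p q act {t. \<forall>s\<in>U. bf s t = 0}"
    by (rule cl0_submodule_bform_perp)
  show "\<And>U Y. cl0_submodule p q act U \<Longrightarrow> cl0_submodule p q act Y \<Longrightarrow> U \<subseteq> Y \<Longrightarrow>
      \<exists>C. cl0_submodule p q act C \<and> C \<subseteq> Y \<and> U \<inter> C = {0} \<and> Y \<subseteq> U + C"
    by (rule cl0_submodule_complement)
  show "\<And>t. linear (\<lambda>s. bf s t)"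
    by (rule linear_bform_left)
  show "\<And>s t. bf s t = bf t s"
    by (rule bform_sym)
qed

context
  fixes U assumes U_submodule: "cl0_submodule p q act U"
begin

lemma Pi_image_subset_Vset: "Pi_image Pmap U \<subseteq> Vset n"
  unfolding Pi_image_def Vset_def using Pmap_outside by auto

lemma Pi_imageI:
  assumes "\<forall>j<(k::nat). s j \<in> U \<and> t j \<in> U" "v = (\<lambda>i. \<Sum>j<k. Pmap (s j) (t j) i)"
  shows "v \<in> Pi_image Pmap U"
  using assms unfolding Pi_image_def by blast

lemma Pi_imageE:
  assumes "v \<in> Pi_image Pmap U"
  obtains k :: nat and s t where "\<forall>j<k. s j \<in> U \<and> t j \<in> U" "v = (\<lambda>i. \<Sum>j<k. Pmap (s j) (t j) i)"
  using assms unfolding Pi_image_def by blast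

lemma zero_in_Pi_image: "(\<lambda>i. 0) \<in> Pi_image Pmap U"
  by (rule Pi_imageI[of 0]) simp_all

lemma Pmap_in_Pi_image: "s \<in> U \<Longrightarrow> t \<in> U \<Longrightarrow> Pmap s t \<in> Pi_image Pmap U"
  by (rule Pi_imageI[of 1 "\<lambda>_. s" "\<lambda>_. t"]) auto

lemma Pi_image_add:
  assumes "v \<in> Pi_image Pmap U" "w \<in> Pi_image Pmap U"
  shows "(\<lambda>i. v i + w i) \<in> Pi_image Pmap U"
proof -
  obtain k1 s1 t1 where v: "\<forall>j<(k1::nat). s1 j \<in> U \<and> t1 j \<in> U" "v = (\<lambda>i. \<Sum>j<k1. Pmap (s1 j) (t1 j) i)"
    using assms(1) by (rule Pi_imageE)
  obtain k2 s2 t2 where w: "\<forall>j<(k2::nat). s2 j \<in> U \<and> t2 j \<in> U" "w = (\<lambda>i. \<Sum>j<k2. Pmap (s2 j) (t2 j) i)"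
    using assms(2) by (rule Pi_imageE)
  define s where "s j = (if j < k1 then s1 j else s2 (j - k1))" for j
  define t where "t j = (if j < k1 then t1 j else t2 (j - k1))" for j
  have "\<forall>j<k1+k2. s j \<in> U \<and> t j \<in> U" unfolding s_def t_def using v(1) w(1) by auto
  moreover have "(\<lambda>i. v i + w i) = (\<lambda>i. \<Sum>j<k1+k2. Pmap (s j) (t j) i)"
    unfolding sum_lessThan_add_split v(2) w(2) s_def t_def by simp
  ultimately show ?thesis by (rule Pi_imageI)
qed

lemma Pi_image_scale:
  assumes "v \<in> Pi_image Pmap U"
  shows "(\<lambda>i. c * v i) \<in> Pi_image Pmap U"
proof -
  obtain k s t where v: "\<forall>j<(k::nat). s j \<in> U \<and> t j \<in> U" "v = (\<lambda>i. \<Sum>j<k. Pmap (s j) (t j) i)"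
    using assms by (rule Pi_imageE)
  have "\<forall>j<k. c *\<^sub>R s j \<in> U \<and> t j \<in> U"
    using v(1) U_submodule subspace_scale unfolding cl0_submodule_def by blast
  moreover have "(\<lambda>i. c * v i) = (\<lambda>i. \<Sum>j<k. Pmap (c *\<^sub>R s j) (t j) i)"
    unfolding v(2) by (simp add: Pmap_scale_left sum_distrib_left)
  ultimately show ?thesis by (rule Pi_imageI)
qed

lemma Pi_image_oV_act:
  assumes v: "v \<in> Pi_image Pmap U" and ij: "i < j" "j < n"
  shows "oV_act p q (stdbasis i) (stdbasis j) v \<in> Pi_image Pmap U"
proof -
  obtain k s t where st: "\<forall>l<(k::nat). s l \<in> U \<and> t l \<in> U" and v_eq: "v = (\<lambda>i. \<Sum>l<k. Pmap (s l) (t l) i)"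
    using v by (rule Pi_imageE)
  let ?A = "act (spin p q (stdbasis i) (stdbasis j))"
  have A_U: "x \<in> U \<Longrightarrow> ?A x \<in> U" for x
    using U_submodule act_spin_stdbasis[OF ij] cl0_submodule_blade_act[OF U_submodule pair_in_even_blades[OF ij]]
      subspace_scale unfolding cl0_submodule_def by metis
  have "oV_act p q (stdbasis i) (stdbasis j) v =
        (\<lambda>r. \<Sum>l<k. oV_act p q (stdbasis i) (stdbasis j) (Pmap (s l) (t l)) r)"
    unfolding v_eq oV_act_stdbasis[OF less_trans[OF ij] ij(2)]
    by (auto simp: sum_distrib_left sum_subtractf fun_eq_iff)
  also have "\<dots> = (\<lambda>r. (\<Sum>l<k. Pmap (?A (s l)) (t l) r) + (\<Sum>l<k. Pmap (s l) (?A (t l)) r))"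
    unfolding sum.distrib[symmetric]
      equivariant_component[OF stdbasis_in_Vset[OF less_trans[OF ij]] stdbasis_in_Vset[OF ij(2)]] ..
  finally show ?thesis
    using Pi_image_add Pi_imageI[of k "\<lambda>l. ?A (s l)" t] Pi_imageI[of k s "\<lambda>l. ?A (t l)"] st A_U
    by simp
qed

lemma Pi_image_restrict_pair:
  assumes v: "v \<in> Pi_image Pmap U" and ij: "i < j" "j < n"
  shows "(\<lambda>k. if k = i \<or> k = j then v k else 0) \<in> Pi_image Pmap U"
proof -
  let ?T = "oV_act p q (stdbasis i) (stdbasis j)"
  have "(\<lambda>k. if k = i \<or> k = j then v k else 0) = (\<lambda>k. (- sgnpq p i * sgnpq p j) * ?T (?T v) k)"
    unfolding oV_act_stdbasis[OF less_trans[OF ij] ij(2)]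
    using ij sgnpq_square[of p i] sgnpq_square[of p j] by (auto simp: fun_eq_iff algebra_simps)
  then show ?thesis
    using Pi_image_scale[OF Pi_image_oV_act[OF Pi_image_oV_act[OF v ij] ij]] by (simp only:)
qed

text \<open>Squares of basis bivectors cut a vector down to two coordinates (up to sign); the pairs
  (0, 1) and (1, 2) thus isolate the first coordinate, and \<open>e\<^sub>1 \<and> e\<^sub>j\<^sub>+\<^sub>1\<close> carries \<open>e\<^sub>1\<close> to
  \<open>e\<^sub>j\<^sub>+\<^sub>1\<close>.\<close>

lemma stdbasis_0_in_Pi_image:
  assumes v: "v \<in> Pi_image Pmap U" and v0: "v 0 \<noteq> 0"
  shows "stdbasis 0 \<in> Pi_image Pmap U"
proof -
  define w where "w = (\<lambda>k. if k = 0 \<or> k = 1 then v k else (0::real))"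
  have w: "w \<in> Pi_image Pmap U"
    unfolding w_def using Pi_image_restrict_pair[OF v, of 0 1] p_ge_3 by simp
  moreover have "(\<lambda>k. if k = 1 \<or> k = 2 then w k else 0) \<in> Pi_image Pmap U"
    using Pi_image_restrict_pair[OF w, of 1 2] p_ge_3 by simp
  ultimately have "(\<lambda>k. w k + (-1) * (if k = 1 \<or> k = 2 then w k else 0)) \<in> Pi_image Pmap U"
    by (intro Pi_image_add Pi_image_scale)
  also have "(\<lambda>k. w k + (-1) * (if k = 1 \<or> k = 2 then w k else 0)) = (\<lambda>k. v 0 * stdbasis 0 k)"
    unfolding w_def stdbasis_def by (auto simp: fun_eq_iff)
  finally have "(\<lambda>k. (1 / v 0) * (v 0 * stdbasis 0 k)) \<in> Pi_image Pmap U"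
    by (rule Pi_image_scale)
  then show ?thesis using v0 by (simp add: fun_eq_iff)
qed

lemma stdbasis_in_Pi_image:
  assumes e0: "stdbasis 0 \<in> Pi_image Pmap U" and j: "j < n"
  shows "stdbasis j \<in> Pi_image Pmap U"
proof (cases "j = 0")
  case False
  then have "(\<lambda>k. (-1) * oV_act p q (stdbasis 0) (stdbasis j) (stdbasis 0) k) \<in> Pi_image Pmap U"
    using j by (intro Pi_image_scale Pi_image_oV_act[OF e0]) simp_all
  moreover have "(\<lambda>k. (-1) * oV_act p q (stdbasis 0) (stdbasis j) (stdbasis 0) k) = stdbasis j"
    unfolding oV_act_stdbasis[OF le_less_trans[OF le0 j] j] using False p_ge_3
    by (auto simp: stdbasis_def fun_eq_iff sgnpq_0)
  ultimately show ?thesis by simp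
qed (use e0 in simp)

lemma Vset_subset_Pi_image:
  assumes basis: "\<And>j. j < n \<Longrightarrow> stdbasis j \<in> Pi_image Pmap U"
  shows "Vset n \<subseteq> Pi_image Pmap U"
proof
  have partial_sums: "(\<lambda>k. \<Sum>j<m. x j * stdbasis j k) \<in> Pi_image Pmap U" if "m \<le> n" for m x
    using that
  proof (induction m)
    case 0
    then show ?case using zero_in_Pi_image by simp
  next
    case (Suc m)
    then show ?case
      using Pi_image_add[OF Suc.IH Pi_image_scale[OF basis, of m "x m"]] by simp
  qed
  fix x assume x: "x \<in> Vset n"
  have "x = (\<lambda>k. \<Sum>j<n. x j * stdbasis j k)"
  proof
    fix k
    show "x k = (\<Sum>j<n. x j * stdbasis j k)"
      using x unfolding Vset_def stdbasis_def by (cases "k < n") (simp_all add: if_distrib cong: if_cong)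
  qed
  then show "x \<in> Pi_image Pmap U" using partial_sums[of n x] by simp
qed

end

lemma Pi_image_eq_Vset:
  assumes U: "cl0_submodule p q act U" "U \<noteq> {0}" and nondeg: "form.nondegenerate U"
  shows "Pi_image Pmap U = Vset n"
proof -
  obtain u where u: "u \<in> U" "u \<noteq> 0" using U form.submodule_zero by blast
  obtain t where t: "t \<in> U" "bf u t \<noteq> 0" using nondeg u unfolding form.nondegenerate_def by blast
  have "E u \<in> U" unfolding E_def using cl0_submodule_blade_act[OF U(1) interval_in_even_blades u(1)] .
  then have "Pmap (E u) t \<in> Pi_image Pmap U" using Pmap_in_Pi_image[OF U(1) _ t(1)] by blast
  moreover have "Pmap (E u) t 0 \<noteq> 0" using t(2) unfolding bform_eq \<beta>_def .
  ultimately have "Vset n \<subseteq> Pi_image Pmap U"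
    using Vset_subset_Pi_image[OF U(1)] stdbasis_in_Pi_image[OF U(1)] stdbasis_0_in_Pi_image[OF U(1)] by blast
  then show ?thesis using Pi_image_subset_Vset[OF U(1)] by blast
qed

lemma irreducible_submodule_eq:
  "form.irreducible_submodule U \<longleftrightarrow> cl0_irreducible p q act U"
  unfolding form.irreducible_submodule_def cl0_irreducible_def ..

lemma Pmap_on_orthogonal_decomposition:
  assumes "form.orthogonal_decomposition l m Ws"
  shows "\<forall>s\<in>Ws 0. \<forall>t. Pmap s t = (\<lambda>k. 0)"
    and "\<forall>i\<le>l+m. \<forall>j\<le>l+m. i \<noteq> j \<longrightarrow> (\<forall>s\<in>Ws i. \<forall>t\<in>Ws j. Pmap s t = (\<lambda>k. 0))"
    and "\<forall>i\<in>{1..l}. Pi_image Pmap (Ws i) = Vset n"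
proof -
  obtain submodule: "\<forall>i\<le>l+m. cl0_submodule p q act (Ws i)"
    and orthogonal: "\<forall>i\<le>l+m. \<forall>j\<le>l+m. i \<noteq> j \<longrightarrow> form.b_orthogonal (Ws i) (Ws j)"
    and radical: "Ws 0 = form.b_radical"
    and nondegenerate: "\<forall>i\<in>{1..l+m}. form.nondegenerate (Ws i)"
    and irreducible: "\<forall>i\<in>{1..l}. form.irreducible_submodule (Ws i)"
    using assms unfolding form.orthogonal_decomposition_def by (elim conjE) (rule that; assumption)
  show "\<forall>s\<in>Ws 0. \<forall>t. Pmap s t = (\<lambda>k. 0)"
  proof (intro ballI allI)
    fix s t assume "s \<in> Ws 0"
    moreover have "\<forall>s'\<in>Ws 0. bf s' t = 0" using radical unfolding form.b_radical_def by simp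
    ultimately show "Pmap s t = (\<lambda>k. 0)"
      using Pmap_vanishes_if_bform_perp submodule by blast
  qed
  show "\<forall>i\<le>l+m. \<forall>j\<le>l+m. i \<noteq> j \<longrightarrow> (\<forall>s\<in>Ws i. \<forall>t\<in>Ws j. Pmap s t = (\<lambda>k. 0))"
  proof (intro allI impI ballI)
    fix i j s t assume ij: "i \<le> l + m" "j \<le> l + m" "i \<noteq> j" and st: "s \<in> Ws i" "t \<in> Ws j"
    then have "\<forall>s'\<in>Ws i. bf s' t = 0"
      using orthogonal unfolding form.b_orthogonal_def by blast
    then show "Pmap s t = (\<lambda>k. 0)"
      using Pmap_vanishes_if_bform_perp submodule ij(1) st(1) by blast
  qed
  show "\<forall>i\<in>{1..l}. Pi_image Pmap (Ws i) = Vset n"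
    using irreducible nondegenerate Pi_image_eq_Vset unfolding form.irreducible_submodule_def by auto
qed

end

theorem mainTheorem3:
  fixes p q p' p'' :: nat
    and act :: "(nat set \<Rightarrow> real) \<Rightarrow> 'w::euclidean_space \<Rightarrow> 'w"
    and Pmap :: "'w \<Rightarrow> 'w \<Rightarrow> nat \<Rightarrow> real"
  assumes "p = p' + p''"
    and "p' mod 4 = 3"
    and "cl0_module p q act"
    and "wedge2_map (p+q) Pmap"
    and "oV_equivariant p q act Pmap"
  defines "b \<equiv> bform p q p' act Pmap"
  shows "\<exists>(l::nat) (m::nat) (Ws :: nat \<Rightarrow> 'w set).
     \<comment> \<open>direct sum decomposition into submodules\<close>
     (\<forall>i\<le>l+m. cl0_submodule p q act (Ws i)) \<and>
     (\<forall>w. \<exists>f. (\<forall>i\<le>l+m. f i \<in> Ws i) \<and> w = (\<Sum>i\<le>l+m. f i)) \<and>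
     (\<forall>f. (\<forall>i\<le>l+m. f i \<in> Ws i) \<and> (\<Sum>i\<le>l+m. f i) = 0 \<longrightarrow> (\<forall>i\<le>l+m. f i = 0)) \<and>
     \<comment> \<open>b-orthogonality\<close>
     (\<forall>i\<le>l+m. \<forall>j\<le>l+m. i \<noteq> j \<longrightarrow> (\<forall>s\<in>Ws i. \<forall>t\<in>Ws j. b s t = 0)) \<and>
     \<comment> \<open>(1)\<close>
     (\<forall>s\<in>Ws 0. \<forall>t. Pmap s t = (\<lambda>k. 0)) \<and>
     (\<forall>i\<le>l+m. \<forall>j\<le>l+m. i \<noteq> j \<longrightarrow> (\<forall>s\<in>Ws i. \<forall>t\<in>Ws j. Pmap s t = (\<lambda>k. 0))) \<and>
     (\<forall>i\<in>{1..l}. Pi_image Pmap (Ws i) = Vset (p+q)) \<and>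
     \<comment> \<open>(2)\<close>
     Ws 0 = {s. \<forall>t. b s t = 0} \<and>
     (\<forall>i\<in>{1..l+m}. \<forall>s\<in>Ws i. (\<forall>t\<in>Ws i. b s t = 0) \<longrightarrow> s = 0) \<and>
     \<comment> \<open>(3)\<close>
     (\<forall>i\<in>{1..l}. cl0_irreducible p q act (Ws i)) \<and>
     (\<forall>j\<in>{l+1..l+m}. \<exists>X X'.
        cl0_irreducible p q act X \<and> cl0_irreducible p q act X' \<and>
        (\<forall>s\<in>X. \<forall>t\<in>X. b s t = 0) \<and> (\<forall>s\<in>X'. \<forall>t\<in>X'. b s t = 0) \<and>
        X \<inter> X' = {0} \<and> Ws j = {x + x' | x x'. x \<in> X \<and> x' \<in> X'}) \<and>
     \<comment> \<open>(4)\<close>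
     (\<forall>U. cl0_irreducible p q act U \<and>
          U \<subseteq> {\<Sum>j\<in>{l+1..l+m}. f j | f. \<forall>j\<in>{l+1..l+m}. f j \<in> Ws j} \<longrightarrow>
          (\<forall>s\<in>U. \<forall>t\<in>U. b s t = 0))"
proof -
  interpret equivariant_wedge_map p q p' act Pmap
    using assms(1-5) by unfold_locales simp_all
  obtain l m Ws where decomposition: "form.orthogonal_decomposition l m Ws"
    using form.orthogonal_decomposition_exists by blast
  show ?thesis
    using decomposition Pmap_on_orthogonal_decomposition[OF decomposition]
    unfolding b_def form.orthogonal_decomposition_def form.b_orthogonal_def form.b_radical_def
      form.nondegenerate_def form.isotropic_def form.hyperbolic_def irreducible_submodule_eq set_plus_eq_sums
    by - (rule exI[of _ l], rule exI[of _ m], rule exI[of _ Ws], elim conjE, intro conjI, assumption+)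
qed

end
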